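(* (1) For all $\lambda,\mu\in Y^+$, $(\lambda+\mu)^{++}\le_{Q^\vee}\lambda^{++}+\mu^{++}$. (2) For all $\mu\in Y^+$, $v\in W^v$ and $\nu\in R_v(\mu)$, one has $\nu\in Y^+$ and $\nu^{++}\le_{Q^\vee}\mu^{++}$.
   Context: $I$ finite, $A$ a generalized Cartan matrix, $Y$ a free $\mathbb Z$-module of finite rank with free family $(\alpha_i^\vee)_{i\in I}$ and $\alpha_i\in\mathrm{Hom}(Y,\mathbb Z)$ (free family) with $\alpha_j(\alpha_i^\vee)=a_{i,j}$; $\mathbb A=Y\otimes\mathbb R$; $r_i(v)=v-\alpha_i(v)\alpha_i^\vee$; $W^v=\langle r_i\rangle$; $Q^\vee=\bigoplus\mathbb Z\alpha_i^\vee$, $Q^\vee_+=\bigoplus\mathbb N\alpha_i^\vee$, $x\le_{Q^\vee}y$ iff $y-x\in Q^\vee_+$; $C^v_f=\{\alpha_i>0\ \forall i\}$, $\mathcal T=\bigcup_w w\overline{C^v_f}$, $Y^+=Y\cap\mathcal T$. For $\lambda\in\mathcal T$, $\lambda^{++}$ is the unique element of $W^v\lambda\cap\overline{C^v_f}$. For $E\subset Y$, $R_i(E)=\mathrm{conv}(E\cup r_i(E))\cap(E+Q^\vee)$; $R_w(\lambda)=\bigcup R_{i_1}(\cdots R_{i_k}(\{\lambda\})\cdots)$ over all reduced expressions $w=r_{i_1}\cdots r_{i_k}$. *)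

theory Defs
  imports "HOL-Analysis.Analysis"
begin

text \<open>The lattice Y of finite rank is
realised as the integer points of real^'d, so that the real span A = Y (x) R is real^'d.
Linear forms Y -> Z are exactly v |-> a \<bullet> v with a an integer vector; the simple roots
alpha_i are represented by such vectors rt i, the simple coroots alpha_i^vee by cor i.\<close>

definition gcm :: "('i \<Rightarrow> 'i \<Rightarrow> int) \<Rightarrow> bool" where
  "gcm A \<longleftrightarrow> (\<forall>i. A i i = 2) \<and> (\<forall>i j. i \<noteq> j \<longrightarrow> A i j \<le> 0)
      \<and> (\<forall>i j. A i j = 0 \<longleftrightarrow> A j i = 0)"

definition Yset :: "(real^'d) set" where
  "Yset = {v. \<forall>k. v $ k \<in> \<int>}"

definition free_family :: "('i::finite \<Rightarrow> real^'d) \<Rightarrow> bool" where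
  "free_family f \<longleftrightarrow>
     (\<forall>c::'i \<Rightarrow> int. (\<Sum>i\<in>UNIV. of_int (c i) *\<^sub>R f i) = 0 \<longrightarrow> (\<forall>i. c i = 0))"

definition root_datum ::
  "('i::finite \<Rightarrow> 'i \<Rightarrow> int) \<Rightarrow> ('i \<Rightarrow> real^'d) \<Rightarrow> ('i \<Rightarrow> real^'d) \<Rightarrow> bool" where
  "root_datum A cor rt \<longleftrightarrow> gcm A \<and> (\<forall>i. cor i \<in> Yset) \<and> free_family cor
     \<and> (\<forall>i. rt i \<in> Yset) \<and> free_family rt
     \<and> (\<forall>i j. rt j \<bullet> cor i = of_int (A i j))"

definition kmr_refl :: "('i \<Rightarrow> real^'d) \<Rightarrow> ('i \<Rightarrow> real^'d) \<Rightarrow> 'i \<Rightarrow> real^'d \<Rightarrow> real^'d" where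
  "kmr_refl cor rt i v = v - (rt i \<bullet> v) *\<^sub>R cor i"

text \<open>The vectorial Weyl group W^v generated by the r_i (they are involutions, so the
monoid generated equals the group generated).\<close>
inductive_set kmr_W :: "('i \<Rightarrow> real^'d) \<Rightarrow> ('i \<Rightarrow> real^'d) \<Rightarrow> (real^'d \<Rightarrow> real^'d) set"
  for cor rt where
  id: "id \<in> kmr_W cor rt"
| step: "w \<in> kmr_W cor rt \<Longrightarrow> kmr_refl cor rt i \<circ> w \<in> kmr_W cor rt"

definition Cf :: "('i \<Rightarrow> real^'d) \<Rightarrow> (real^'d) set" where
  "Cf rt = {v. \<forall>i. 0 < rt i \<bullet> v}"

definition tits_cone :: "('i \<Rightarrow> real^'d) \<Rightarrow> ('i \<Rightarrow> real^'d) \<Rightarrow> (real^'d) set" where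
  "tits_cone cor rt = (\<Union>w\<in>kmr_W cor rt. w ` closure (Cf rt))"

definition Yplus :: "('i \<Rightarrow> real^'d) \<Rightarrow> ('i \<Rightarrow> real^'d) \<Rightarrow> (real^'d) set" where
  "Yplus cor rt = Yset \<inter> tits_cone cor rt"

text \<open>lambda^{++}: the unique element of W^v lambda in the closed fundamental chamber.\<close>
definition dom_elt :: "('i \<Rightarrow> real^'d) \<Rightarrow> ('i \<Rightarrow> real^'d) \<Rightarrow> real^'d \<Rightarrow> real^'d" where
  "dom_elt cor rt x =
     (THE \<mu>. \<mu> \<in> (\<lambda>w. w x) ` kmr_W cor rt \<inter> closure (Cf rt))"

definition Qcor :: "('i::finite \<Rightarrow> real^'d) \<Rightarrow> (real^'d) set" where
  "Qcor cor = {(\<Sum>i\<in>UNIV. of_int (n i) *\<^sub>R cor i) | n :: 'i \<Rightarrow> int. True}"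

definition Qcor_plus :: "('i::finite \<Rightarrow> real^'d) \<Rightarrow> (real^'d) set" where
  "Qcor_plus cor = {(\<Sum>i\<in>UNIV. of_nat (n i) *\<^sub>R cor i) | n :: 'i \<Rightarrow> nat. True}"

definition leQ :: "('i::finite \<Rightarrow> real^'d) \<Rightarrow> real^'d \<Rightarrow> real^'d \<Rightarrow> bool" where
  "leQ cor x y \<longleftrightarrow> y - x \<in> Qcor_plus cor"

definition R_i :: "('i::finite \<Rightarrow> real^'d) \<Rightarrow> ('i \<Rightarrow> real^'d) \<Rightarrow> 'i \<Rightarrow> (real^'d) set \<Rightarrow> (real^'d) set" where
  "R_i cor rt i E = convex hull (E \<union> kmr_refl cor rt i ` E)
      \<inter> {e + q | e q. e \<in> E \<and> q \<in> Qcor cor}"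

definition word_prod :: "('i \<Rightarrow> real^'d) \<Rightarrow> ('i \<Rightarrow> real^'d) \<Rightarrow> 'i list \<Rightarrow> real^'d \<Rightarrow> real^'d" where
  "word_prod cor rt is = foldr (\<lambda>i f. kmr_refl cor rt i \<circ> f) is id"

definition reduced_expr :: "('i \<Rightarrow> real^'d) \<Rightarrow> ('i \<Rightarrow> real^'d) \<Rightarrow> (real^'d \<Rightarrow> real^'d) \<Rightarrow> 'i list \<Rightarrow> bool" where
  "reduced_expr cor rt w is \<longleftrightarrow> word_prod cor rt is = w
     \<and> (\<forall>js. word_prod cor rt js = w \<longrightarrow> length is \<le> length js)"

definition R_w :: "('i::finite \<Rightarrow> real^'d) \<Rightarrow> ('i \<Rightarrow> real^'d) \<Rightarrow> (real^'d \<Rightarrow> real^'d) \<Rightarrow> real^'d \<Rightarrow> (real^'d) set" where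
  "R_w cor rt w x = (\<Union>is \<in> {is. reduced_expr cor rt w is}. foldr (R_i cor rt) is {x})"

end

theory Submission
  imports Defs
begin

text \<open>Everything rests on the sign rule for real roots: if \<open>\<ell>(r\<^sub>i w) \<ge> \<ell>(w)\<close>, then
\<open>\<alpha>\<^sub>i \<circ> w\<close> is a nonnegative combination of the simple roots. As in Tits' proof it is reduced to
rank two, where the dihedral group generated by \<open>r\<^sub>i, r\<^sub>j\<close> is either infinite
(\<open>a\<^sub>i\<^sub>j a\<^sub>j\<^sub>i \<ge> 4\<close>, and the coefficients stay nonnegative along every alternating word) or finite
of order 4, 6, 8 or 12 (and a braid relation shortens every long alternating word).

First, if \<open>\<lambda> \<in> Y\<close> is dominant then \<open>\<lambda> - w\<lambda> \<in> Q\<^sup>\<or>\<^sub>+\<close> for all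
\<open>w\<close>, by induction on \<open>\<ell>(w)\<close>. Second, the Tits cone is the set of points at which only finitely
many positive real roots are negative, hence a convex cone. Then
\<open>(\<lambda>+\<mu>)\<^sup>+\<^sup>+ = w(\<lambda>+\<mu>) = w\<lambda> + w\<mu>\<close> gives (1). For (2), every \<open>R\<^sub>i\<close> preserves
\<open>conv(W\<^sup>v\<mu>\<^sup>+\<^sup>+) \<inter> (\<mu>\<^sup>+\<^sup>+ + Q\<^sup>\<or>)\<close>; this set lies in the Tits cone and is \<open>W\<^sup>v\<close>-stable, and it is
contained in \<open>\<mu>\<^sup>+\<^sup>+ - \<real>\<^sub>+\<alpha>\<^sup>\<or>\<close>; as the coroots are linearly independent over \<open>\<real>\<close>, a point of
\<open>\<mu>\<^sup>+\<^sup>+ + Q\<^sup>\<or>\<close> in that cone lies in \<open>\<mu>\<^sup>+\<^sup>+ - Q\<^sup>\<or>\<^sub>+\<close>.\<close>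

section \<open>Root data and the Weyl group\<close>

locale kac_moody =
  fixes A :: "'i::finite \<Rightarrow> 'i \<Rightarrow> int" and cor rt :: "'i \<Rightarrow> real^'d"
  assumes root_datum: "root_datum A cor rt"
begin

abbreviation r where "r \<equiv> kmr_refl cor rt"
abbreviation wprod where "wprod \<equiv> word_prod cor rt"
abbreviation W where "W \<equiv> kmr_W cor rt"

lemma gcm_A: "gcm A"
  using root_datum by (simp add: root_datum_def)

lemma A_diag: "A i i = 2"
  using gcm_A by (simp add: gcm_def)

lemma A_offdiag_nonpos: "i \<noteq> j \<Longrightarrow> A i j \<le> 0"
  using gcm_A by (simp add: gcm_def)

lemma A_eq_0_sym: "A i j = 0 \<longleftrightarrow> A j i = 0"
  using gcm_A by (simp add: gcm_def)

lemma rt_cor: "rt j \<bullet> cor i = of_int (A i j)"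
  using root_datum by (simp add: root_datum_def)

lemma cor_in_Yset: "cor i \<in> Yset"
  using root_datum by (simp add: root_datum_def)

lemma rt_in_Yset: "rt i \<in> Yset"
  using root_datum by (simp add: root_datum_def)

lemma free_cor: "free_family cor"
  using root_datum by (simp add: root_datum_def)

lemma free_rt: "free_family rt"
  using root_datum by (simp add: root_datum_def)

lemma r_eq: "r i v = v - (rt i \<bullet> v) *\<^sub>R cor i"
  by (simp add: kmr_refl_def)

lemma rt_r: "rt k \<bullet> r i v = rt k \<bullet> v - (rt i \<bullet> v) * of_int (A i k)"
  by (simp add: kmr_refl_def inner_diff_right rt_cor)

lemma rt_r_self: "rt i \<bullet> r i v = - (rt i \<bullet> v)"
  by (simp add: rt_r A_diag)

lemma r_r [simp]: "r i (r i v) = v"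
  by (simp add: r_eq inner_diff_right rt_cor A_diag)

lemma r_comp_r_self [simp]: "r i \<circ> r i = id"
  by (simp add: fun_eq_iff)

lemma r_comp_r [simp]: "r i \<circ> (r i \<circ> f) = f"
  by (simp add: fun_eq_iff)

lemma r_linear: "linear (r i)"
  by (rule linearI) (simp_all add: r_eq inner_add_right algebra_simps)

lemma wprod_Nil [simp]: "wprod [] = id"
  by (simp add: word_prod_def)

lemma wprod_Cons [simp]: "wprod (i # l) = r i \<circ> wprod l"
  by (simp add: word_prod_def)

lemma wprod_append: "wprod (l1 @ l2) = wprod l1 \<circ> wprod l2"
  by (induction l1) auto

lemma wprod_rev_inverse: "wprod (rev l) \<circ> wprod l = id"
  by (induction l) (auto simp: wprod_append fun_eq_iff)

lemma wprod_linear: "linear (wprod l)"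
proof (induction l)
  case (Cons i l)
  show ?case unfolding wprod_Cons by (rule linear_compose[OF Cons.IH r_linear])
qed (simp add: linearI)

lemma W_eq_range_wprod: "W = range wprod"
proof (intro set_eqI iffI)
  fix w assume "w \<in> W"
  then show "w \<in> range wprod"
  proof induction
    case (step w i)
    then obtain l where "w = wprod l" by auto
    then show ?case by (metis rangeI wprod_Cons)
  qed (metis rangeI wprod_Nil)
next
  fix w assume "w \<in> range wprod"
  then obtain l where "w = wprod l" by auto
  then show "w \<in> W" by (induction l arbitrary: w) (auto intro: kmr_W.intros)
qed

lemma wprod_in_W [simp]: "wprod l \<in> W"
  by (simp add: W_eq_range_wprod)

lemma id_in_W: "id \<in> W"
  by (rule kmr_W.id)

lemma r_comp_in_W: "w \<in> W \<Longrightarrow> r i \<circ> w \<in> W"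
  by (rule kmr_W.step)

lemma r_in_W: "r i \<in> W"
  using r_comp_in_W[OF id_in_W] by simp

lemma W_comp: "u \<in> W \<Longrightarrow> w \<in> W \<Longrightarrow> u \<circ> w \<in> W"
  by (auto simp: W_eq_range_wprod wprod_append[symmetric])

lemma W_inverse:
  assumes "w \<in> W"
  obtains u where "u \<in> W" "u \<circ> w = id" "w \<circ> u = id"
proof -
  from assms obtain l where "w = wprod l" by (auto simp: W_eq_range_wprod)
  then show ?thesis
    using that[of "wprod (rev l)"] wprod_rev_inverse[of l] wprod_rev_inverse[of "rev l"] by auto
qed

lemma W_linear: "w \<in> W \<Longrightarrow> linear w"
  by (auto simp: W_eq_range_wprod wprod_linear)

definition wlen :: "(real^'d \<Rightarrow> real^'d) \<Rightarrow> nat" where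
  "wlen w = (LEAST n. \<exists>l. length l = n \<and> wprod l = w)"

lemma wlen_wprod_le: "wlen (wprod l) \<le> length l"
  unfolding wlen_def by (rule Least_le) auto

lemma reduced_word_exists:
  assumes "w \<in> W"
  obtains l where "wprod l = w" "length l = wlen w"
proof -
  from assms obtain l0 where "wprod l0 = w" by (auto simp: W_eq_range_wprod)
  then have "\<exists>n l. length l = n \<and> wprod l = w" by auto
  from LeastI_ex[OF this] show ?thesis using that unfolding wlen_def by metis
qed

lemma wlen_comp_le:
  assumes "u \<in> W" "x \<in> W"
  shows "wlen (u \<circ> x) \<le> wlen u + wlen x"
proof -
  obtain lu lx where "wprod lu = u" "length lu = wlen u" "wprod lx = x" "length lx = wlen x"
    using reduced_word_exists assms by metis
  then show ?thesis using wlen_wprod_le[of "lu @ lx"] by (simp add: wprod_append)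
qed

lemma wlen_r_comp_le:
  assumes "x \<in> W"
  shows "wlen (r i \<circ> x) \<le> wlen x + 1"
proof -
  have "wlen (r i) \<le> 1" using wlen_wprod_le[of "[i]"] by simp
  then show ?thesis using wlen_comp_le[OF r_in_W assms, of i] by simp
qed

lemma wlen_eq_0: "w \<in> W \<Longrightarrow> wlen w = 0 \<Longrightarrow> w = id"
  by (metis reduced_word_exists length_0_conv wprod_Nil)


end

section \<open>Rank two\<close>

fun alt_word :: "'a \<Rightarrow> 'a \<Rightarrow> nat \<Rightarrow> 'a list" where
  "alt_word x y 0 = []"
| "alt_word x y (Suc n) = x # alt_word y x n"

lemma length_alt_word [simp]: "length (alt_word x y n) = n"
  by (induction n arbitrary: x y) auto

lemma set_alt_word: "set (alt_word x y n) \<subseteq> {x, y}"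
  by (induction n arbitrary: x y) auto

lemma alt_word_add:
  "alt_word x y (m + n) = alt_word x y m @ (if even m then alt_word x y n else alt_word y x n)"
  by (induction m arbitrary: x y) auto

lemma alt_word_if_no_square:
  assumes "x \<noteq> y" "set ys \<subseteq> {x, y}" "ys \<noteq> []" "hd ys = x" "\<forall>p z q. ys \<noteq> p @ z # z # q"
  shows "ys = alt_word x y (length ys)"
  using assms
proof (induction ys arbitrary: x y)
  case (Cons x' rest)
  show ?case
  proof (cases rest)
    case (Cons y' rest')
    have "y' \<noteq> x" using Cons.prems(4,5) unfolding \<open>rest = y' # rest'\<close>
      by (metis append_Nil list.sel(1))
    then have "y' = y" using Cons.prems(2) Cons by auto
    have "\<forall>p z q. rest \<noteq> p @ z # z # q"
      using Cons.prems(5) by (metis append_Cons)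
    then have "rest = alt_word y x (length rest)"
      using Cons.IH[of y x] Cons.prems \<open>y' = y\<close> \<open>rest = y' # rest'\<close> by auto
    then show ?thesis using Cons.prems by simp
  qed (use Cons in simp)
qed simp

text \<open>With \<open>a = -a\<^sub>i\<^sub>j\<close>, \<open>b = -a\<^sub>j\<^sub>i\<close>: the coefficients of \<open>(s\<alpha>\<^sub>i + t\<alpha>\<^sub>j) \<circ> w\<close> on \<open>\<alpha>\<^sub>i, \<alpha>\<^sub>j\<close>,
where \<open>w\<close> is the product of an \<open>{i,j}\<close>-word.\<close>

fun dihedral_root_coeffs :: "'i \<Rightarrow> real \<Rightarrow> real \<Rightarrow> real \<times> real \<Rightarrow> 'i list \<Rightarrow> real \<times> real" where
  "dihedral_root_coeffs i a b st [] = st"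
| "dihedral_root_coeffs i a b (s, t) (x # l) =
     (if x = i then dihedral_root_coeffs i a b (t * a - s, t) l
      else dihedral_root_coeffs i a b (s, s * b - t) l)"

text \<open>The coefficients \<open>(P, Q)\<close> with \<open>w v = v + P\<alpha>\<^sup>\<or>\<^sub>i + Q\<alpha>\<^sup>\<or>\<^sub>j\<close>, for \<open>X = \<alpha>\<^sub>i(v)\<close>, \<open>Y = \<alpha>\<^sub>j(v)\<close>.\<close>

fun dihedral_shift :: "'i \<Rightarrow> real \<Rightarrow> real \<Rightarrow> real \<Rightarrow> real \<Rightarrow> 'i list \<Rightarrow> real \<times> real" where
  "dihedral_shift i a b X Y [] = (0, 0)"
| "dihedral_shift i a b X Y (x # l) = (case dihedral_shift i a b X Y l of (P, Q) \<Rightarrow>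
      if x = i then (- X - P + b * Q, Q) else (P, - Y + a * P - Q))"

lemma dihedral_root_coeffs_nonneg:
  fixes a b :: real
  assumes "a \<ge> 0" "b \<ge> 0" "a * b \<ge> 4" "i \<noteq> j"
  shows "(\<forall>s t. s \<ge> 0 \<and> t \<ge> 0 \<and> 2 * t \<le> s * b \<longrightarrow>
            fst (dihedral_root_coeffs i a b (s, t) (alt_word j i n)) \<ge> 0 \<and>
            snd (dihedral_root_coeffs i a b (s, t) (alt_word j i n)) \<ge> 0) \<and>
         (\<forall>s t. s \<ge> 0 \<and> t \<ge> 0 \<and> 2 * s \<le> t * a \<longrightarrow>
            fst (dihedral_root_coeffs i a b (s, t) (alt_word i j n)) \<ge> 0 \<and>
            snd (dihedral_root_coeffs i a b (s, t) (alt_word i j n)) \<ge> 0)"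
proof (induction n)
  case (Suc n)
  text \<open>The invariants \<open>2t \<le> sb\<close> and \<open>2s \<le> ta\<close> are exchanged by the two reflections because \<open>ab \<ge> 4\<close>.\<close>
  have inv_i: "2 * s \<le> (s * b - t) * a" if "s \<ge> 0" "t \<ge> 0" "2 * t \<le> s * b" for s t
  proof -
    have "s * b / 2 \<le> s * b - t" using that by linarith
    then have "(s * b / 2) * a \<le> (s * b - t) * a" using assms by (intro mult_right_mono) auto
    moreover have "s * (a * b) \<ge> s * 4" using that assms by (intro mult_left_mono) auto
    ultimately show ?thesis by (simp add: algebra_simps)
  qed
  have inv_j: "2 * t \<le> (t * a - s) * b" if "s \<ge> 0" "t \<ge> 0" "2 * s \<le> t * a" for s t
  proof -
    have "t * a / 2 \<le> t * a - s" using that by linarith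
    then have "(t * a / 2) * b \<le> (t * a - s) * b" using assms by (intro mult_right_mono) auto
    moreover have "t * (a * b) \<ge> t * 4" using that assms by (intro mult_left_mono) auto
    ultimately show ?thesis by (simp add: algebra_simps)
  qed
  show ?case
  proof (rule conjI; intro allI impI)
    fix s t assume h: "s \<ge> 0 \<and> t \<ge> 0 \<and> 2 * t \<le> s * b"
    then have "s * b - t \<ge> 0" by linarith
    then show "fst (dihedral_root_coeffs i a b (s, t) (alt_word j i (Suc n))) \<ge> 0 \<and>
               snd (dihedral_root_coeffs i a b (s, t) (alt_word j i (Suc n))) \<ge> 0"
      using Suc.IH inv_i[of s t] h assms(4)[symmetric] by auto
  next
    fix s t assume h: "s \<ge> 0 \<and> t \<ge> 0 \<and> 2 * s \<le> t * a"
    then have "t * a - s \<ge> 0" by linarith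
    then show "fst (dihedral_root_coeffs i a b (s, t) (alt_word i j (Suc n))) \<ge> 0 \<and>
               snd (dihedral_root_coeffs i a b (s, t) (alt_word i j (Suc n))) \<ge> 0"
      using Suc.IH inv_j[of s t] h by auto
  qed
qed simp

lemma cartan_product_lt_4_cases:
  fixes p q :: int
  assumes "p \<ge> 0" "q \<ge> 0" "p = 0 \<longleftrightarrow> q = 0" "p * q < 4"
  shows "(p = 0 \<and> q = 0) \<or> (p = 1 \<and> q = 1) \<or> (p = 1 \<and> q = 2) \<or> (p = 2 \<and> q = 1)
       \<or> (p = 1 \<and> q = 3) \<or> (p = 3 \<and> q = 1)"
proof (cases "p = 0")
  case False
  then have "p \<ge> 1" "q \<ge> 1" using assms by auto
  moreover from this have "p \<le> p * q" "q \<le> p * q"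
    by (simp_all add: mult_le_cancel_left1 mult_le_cancel_right1)
  ultimately have "p < 4" "q < 4" using assms(4) by linarith+
  with \<open>p \<ge> 1\<close> \<open>q \<ge> 1\<close> have "p \<in> {1, 2, 3}" "q \<in> {1, 2, 3}" by auto
  then show ?thesis using assms by auto
qed (use assms in auto)

context kac_moody
begin

abbreviation dihedral_coeffs :: "'i \<Rightarrow> 'i \<Rightarrow> real \<times> real \<Rightarrow> 'i list \<Rightarrow> real \<times> real" where
  "dihedral_coeffs i j \<equiv> dihedral_root_coeffs i (- of_int (A i j)) (- of_int (A j i))"

definition alt_coeffs_nonneg :: "'i \<Rightarrow> 'i \<Rightarrow> nat \<Rightarrow> bool" where
  "alt_coeffs_nonneg i j n \<longleftrightarrow>
     0 \<le> fst (dihedral_coeffs i j (1, 0) (alt_word j i n)) \<and>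
     0 \<le> snd (dihedral_coeffs i j (1, 0) (alt_word j i n))"

lemma rt_wprod_dihedral:
  assumes "set l \<subseteq> {i, j}" "i \<noteq> j"
  shows "s * (rt i \<bullet> wprod l v) + t * (rt j \<bullet> wprod l v) =
     fst (dihedral_coeffs i j (s, t) l) * (rt i \<bullet> v) + snd (dihedral_coeffs i j (s, t) l) * (rt j \<bullet> v)"
  using assms(1)
proof (induction l arbitrary: s t)
  case (Cons x l)
  let ?u = "wprod l v"
  show ?case
  proof (cases "x = i")
    case True
    have "s * (rt i \<bullet> wprod (x # l) v) + t * (rt j \<bullet> wprod (x # l) v)
        = (t * (- of_int (A i j)) - s) * (rt i \<bullet> ?u) + t * (rt j \<bullet> ?u)"
      using True by (simp add: rt_r A_diag algebra_simps)
    then show ?thesis using Cons True by simp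
  next
    case False
    then have "x = j" using Cons.prems by auto
    have "s * (rt i \<bullet> wprod (x # l) v) + t * (rt j \<bullet> wprod (x # l) v)
        = s * (rt i \<bullet> ?u) + (s * (- of_int (A j i)) - t) * (rt j \<bullet> ?u)"
      using \<open>x = j\<close> by (simp add: rt_r A_diag algebra_simps)
    then show ?thesis using Cons False by simp
  qed
qed simp

lemma wprod_dihedral:
  fixes v :: "real^'d"
  assumes "set l \<subseteq> {i, j}" "i \<noteq> j"
  defines "PQ \<equiv> dihedral_shift i (- of_int (A i j)) (- of_int (A j i)) (rt i \<bullet> v) (rt j \<bullet> v) l"
  shows "wprod l v = v + fst PQ *\<^sub>R cor i + snd PQ *\<^sub>R cor j"
  using assms(1) unfolding PQ_def
proof (induction l)
  case (Cons x l)
  obtain P Q where PQ: "dihedral_shift i (- of_int (A i j)) (- of_int (A j i)) (rt i \<bullet> v) (rt j \<bullet> v) l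
      = (P, Q)"
    by fastforce
  have IH: "wprod l v = v + P *\<^sub>R cor i + Q *\<^sub>R cor j" using Cons PQ by simp
  show ?case
  proof (cases "x = i")
    case True
    have "rt i \<bullet> wprod l v = rt i \<bullet> v + 2 * P + Q * of_int (A j i)"
      using IH by (simp add: inner_add_right rt_cor A_diag)
    then have "wprod (x # l) v
        = (v + P *\<^sub>R cor i + Q *\<^sub>R cor j) - (rt i \<bullet> v + 2 * P + Q * of_int (A j i)) *\<^sub>R cor i"
      using True IH by (simp add: r_eq)
    then show ?thesis using True PQ
      by (simp del: wprod_Cons add: vec_eq_iff algebra_simps)
  next
    case False
    then have "x = j" using Cons.prems by auto
    have "rt j \<bullet> wprod l v = rt j \<bullet> v + P * of_int (A i j) + 2 * Q"
      using IH by (simp add: inner_add_right rt_cor A_diag)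
    then have "wprod (x # l) v
        = (v + P *\<^sub>R cor i + Q *\<^sub>R cor j) - (rt j \<bullet> v + P * of_int (A i j) + 2 * Q) *\<^sub>R cor j"
      using \<open>x = j\<close> IH by (simp add: r_eq)
    then show ?thesis using \<open>x = j\<close> \<open>i \<noteq> j\<close> PQ
      by (simp del: wprod_Cons add: vec_eq_iff algebra_simps)
  qed
qed simp

lemma braid_relation_if_dihedral_shift_eq:
  assumes ij: "i \<noteq> j"
    and eq: "\<And>X Y. dihedral_shift i (- of_int (A i j)) (- of_int (A j i)) X Y (alt_word j i m)
                  = dihedral_shift i (- of_int (A i j)) (- of_int (A j i)) X Y (alt_word i j m)"
  shows "wprod (alt_word j i m) = wprod (alt_word i j m)"
proof
  fix v
  have "set (alt_word j i m) \<subseteq> {i, j}" "set (alt_word i j m) \<subseteq> {i, j}"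
    using set_alt_word[of j i m] set_alt_word[of i j m] by auto
  then show "wprod (alt_word j i m) v = wprod (alt_word i j m) v"
    using wprod_dihedral[OF _ ij, of _ v] eq by metis
qed

text \<open>The group generated by \<open>r\<^sub>i, r\<^sub>j\<close> is infinite iff \<open>a\<^sub>i\<^sub>j a\<^sub>j\<^sub>i \<ge> 4\<close>; otherwise its braid
relation has length 2, 3, 4 or 6, and is checked by computing \<open>dihedral_shift\<close>.\<close>

lemma dihedral_alternatives:
  assumes ij: "i \<noteq> j"
  shows "(\<forall>n. alt_coeffs_nonneg i j n) \<or>
         (\<exists>m>0. wprod (alt_word j i m) = wprod (alt_word i j m) \<and> (\<forall>n<m. alt_coeffs_nonneg i j n))"
proof -
  have braid: "?thesis"
    if "m > 0" "\<And>X Y. dihedral_shift i (- of_int (A i j)) (- of_int (A j i)) X Y (alt_word j i m)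
                      = dihedral_shift i (- of_int (A i j)) (- of_int (A j i)) X Y (alt_word i j m)"
       "\<forall>n<m. alt_coeffs_nonneg i j n" for m
    using that braid_relation_if_dihedral_shift_eq[OF ij, of m] by auto
  define p where "p = - A i j"
  define q where "q = - A j i"
  have pq: "p \<ge> 0" "q \<ge> 0" "p = 0 \<longleftrightarrow> q = 0"
    using A_offdiag_nonpos[OF ij] A_offdiag_nonpos[OF ij[symmetric]] A_eq_0_sym[of i j]
    unfolding p_def q_def by auto
  show ?thesis
  proof (cases "p * q \<ge> 4")
    case True
    then have ab: "real_of_int p \<ge> 0" "real_of_int q \<ge> 0" "real_of_int p * real_of_int q \<ge> 4"
      using pq by (simp_all, metis of_int_le_iff of_int_mult of_int_numeral)
    have "alt_coeffs_nonneg i j n" for n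
      using conjunct1[OF dihedral_root_coeffs_nonneg[OF ab ij, of n], rule_format, of 1 0] ab
      unfolding alt_coeffs_nonneg_def p_def q_def by simp
    then show ?thesis by blast
  next
    case False
    note evaluate = alt_coeffs_nonneg_def less_Suc_eq eval_nat_numeral algebra_simps
    from False consider (A1xA1) "A i j = 0" "A j i = 0" | (A2) "A i j = -1" "A j i = -1"
      | (B2) "A i j = -1" "A j i = -2" | (C2) "A i j = -2" "A j i = -1"
      | (G2) "A i j = -1" "A j i = -3" | (G2') "A i j = -3" "A j i = -1"
      using cartan_product_lt_4_cases[OF pq] unfolding p_def q_def by force
    then show ?thesis
    proof cases
      case A1xA1 show ?thesis by (rule braid[of 2]) (use A1xA1 ij in \<open>auto simp: evaluate\<close>)
    next
      case A2 show ?thesis by (rule braid[of 3]) (use A2 ij in \<open>auto simp: evaluate\<close>)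
    next
      case B2 show ?thesis by (rule braid[of 4]) (use B2 ij in \<open>auto simp: evaluate\<close>)
    next
      case C2 show ?thesis by (rule braid[of 4]) (use C2 ij in \<open>auto simp: evaluate\<close>)
    next
      case G2 show ?thesis by (rule braid[of 6]) (use G2 ij in \<open>auto simp: evaluate\<close>)
    next
      case G2' show ?thesis by (rule braid[of 6]) (use G2' ij in \<open>auto simp: evaluate\<close>)
    qed
  qed
qed

lemma reduced_dihedral_word_alternates:
  assumes ij: "i \<noteq> j" and ys: "set ys \<subseteq> {i, j}" "ys \<noteq> []"
    and shortest: "\<And>zs. set zs \<subseteq> {i, j} \<Longrightarrow> wprod zs = wprod ys \<Longrightarrow> length ys \<le> length zs"
    and shortest_r: "\<And>zs. set zs \<subseteq> {i, j} \<Longrightarrow> wprod zs = r i \<circ> wprod ys \<Longrightarrow> length ys \<le> length zs"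
  shows "ys = alt_word j i (length ys)"
proof -
  have no_square: "\<forall>p z q. ys \<noteq> p @ z # z # q"
  proof (intro allI notI)
    fix p z q assume e: "ys = p @ z # z # q"
    have "wprod (p @ q) = wprod ys" by (simp add: e wprod_append fun_eq_iff)
    moreover have "set (p @ q) \<subseteq> {i, j}" using ys e by auto
    ultimately show False using shortest[of "p @ q"] e by simp
  qed
  obtain x rest where xr: "ys = x # rest" using ys(2) by (cases ys) auto
  have "x \<noteq> i"
  proof
    assume "x = i"
    then have "wprod rest = r i \<circ> wprod ys" by (simp add: xr fun_eq_iff)
    then show False using shortest_r[of rest] ys xr by simp
  qed
  then have "hd ys = j" using xr ys by auto
  then show ?thesis using alt_word_if_no_square[OF ij[symmetric], of ys] ys no_square by auto
qed

lemma reduced_alt_word_shorter_than_braid: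
  assumes m: "m > 0" "wprod (alt_word j i m) = wprod (alt_word i j m)"
    and shortest_r: "\<And>zs. set zs \<subseteq> {i, j} \<Longrightarrow> wprod zs = r i \<circ> wprod (alt_word j i k) \<Longrightarrow> k \<le> length zs"
  shows "k < m"
proof (rule ccontr)
  assume "\<not> k < m"
  text \<open>The braid relation turns the word into one starting with \<open>i\<close>, so \<open>r\<^sub>i \<circ> w\<close> is shorter.\<close>
  obtain m' where m': "m = Suc m'" using m(1) by (cases m) auto
  define rest where "rest = (if even m then alt_word j i (k - m) else alt_word i j (k - m))"
  have "alt_word j i k = alt_word j i m @ rest"
    using alt_word_add[of j i m "k - m"] \<open>\<not> k < m\<close> unfolding rest_def by simp
  then have "wprod (alt_word j i k) = wprod (alt_word i j m) \<circ> wprod rest" by (simp add: wprod_append m(2))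
  then have "wprod (alt_word j i k) = r i \<circ> wprod (alt_word j i m' @ rest)"
    by (simp add: m' wprod_append comp_assoc)
  then have "wprod (alt_word j i m' @ rest) = r i \<circ> wprod (alt_word j i k)" by (simp add: fun_eq_iff)
  moreover have "set (alt_word j i m' @ rest) \<subseteq> {i, j}"
    using set_alt_word[of j i m'] set_alt_word[of j i "k - m"] set_alt_word[of i j "k - m"]
    unfolding rest_def by auto
  ultimately have "k \<le> length (alt_word j i m' @ rest)" using shortest_r by blast
  moreover have "length rest = k - m" unfolding rest_def by simp
  ultimately show False using \<open>\<not> k < m\<close> m' by simp
qed

lemma rank2_root_nonneg:
  assumes ij: "i \<noteq> j" and ys: "set ys \<subseteq> {i, j}"
    and shortest: "\<And>zs. set zs \<subseteq> {i, j} \<Longrightarrow> wprod zs = wprod ys \<Longrightarrow> length ys \<le> length zs"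
    and shortest_r: "\<And>zs. set zs \<subseteq> {i, j} \<Longrightarrow> wprod zs = r i \<circ> wprod ys \<Longrightarrow> length ys \<le> length zs"
  obtains s t where "s \<ge> 0" "t \<ge> 0" "\<And>v. rt i \<bullet> wprod ys v = s * (rt i \<bullet> v) + t * (rt j \<bullet> v)"
proof (cases "ys = []")
  case True
  then show ?thesis by (intro that[of 1 0]) auto
next
  case False
  define k where "k = length ys"
  have ys_alt: "ys = alt_word j i k"
    unfolding k_def by (rule reduced_dihedral_word_alternates[OF ij ys False shortest shortest_r])
  have "alt_coeffs_nonneg i j k"
    using dihedral_alternatives[OF ij]
  proof
    assume "\<exists>m>0. wprod (alt_word j i m) = wprod (alt_word i j m) \<and> (\<forall>n<m. alt_coeffs_nonneg i j n)"
    then obtain m where "m > 0" "wprod (alt_word j i m) = wprod (alt_word i j m)"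
      "\<forall>n<m. alt_coeffs_nonneg i j n" by blast
    moreover have "k < m"
      using reduced_alt_word_shorter_than_braid[OF \<open>m > 0\<close> \<open>wprod (alt_word j i m) = _\<close>] shortest_r
      unfolding ys_alt k_def[symmetric] by (metis length_alt_word)
    ultimately show ?thesis by blast
  qed auto
  then show ?thesis
    using that[of "fst (dihedral_coeffs i j (1, 0) ys)" "snd (dihedral_coeffs i j (1, 0) ys)"]
      rt_wprod_dihedral[OF ys ij, of 1 _ 0] ys_alt
    unfolding alt_coeffs_nonneg_def by simp
qed

section \<open>The sign rule for real roots\<close>

definition root_comb :: "('i \<Rightarrow> real) \<Rightarrow> real^'d \<Rightarrow> real" where
  "root_comb c v = (\<Sum>k\<in>UNIV. c k * (rt k \<bullet> v))"

definition nonneg_comb :: "(real^'d \<Rightarrow> real) \<Rightarrow> bool" where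
  "nonneg_comb g \<longleftrightarrow> (\<exists>c. (\<forall>k. 0 \<le> c k) \<and> g = root_comb c)"

lemma root_comb_indicator: "root_comb (\<lambda>k. if k = i then 1 else 0) = (\<lambda>v. rt i \<bullet> v)"
proof
  fix v
  have "root_comb (\<lambda>k. if k = i then 1 else 0) v = (\<Sum>k\<in>UNIV. if k = i then rt k \<bullet> v else 0)"
    unfolding root_comb_def by (rule sum.cong) auto
  then show "root_comb (\<lambda>k. if k = i then 1 else 0) v = rt i \<bullet> v" by simp
qed

lemma nonneg_comb_rt: "nonneg_comb (\<lambda>v. rt i \<bullet> v)"
  unfolding nonneg_comb_def by (rule exI[of _ "\<lambda>k. if k = i then 1 else 0"]) (simp add: root_comb_indicator)

lemma nonneg_comb_lincomb:
  assumes "nonneg_comb f" "nonneg_comb g" "s \<ge> 0" "t \<ge> 0"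
  shows "nonneg_comb (\<lambda>v. s * f v + t * g v)"
proof -
  obtain c d where "\<forall>k. 0 \<le> c k" "f = root_comb c" "\<forall>k. 0 \<le> d k" "g = root_comb d"
    using assms(1,2) unfolding nonneg_comb_def by blast
  with assms(3,4) show ?thesis unfolding nonneg_comb_def
    by (intro exI[of _ "\<lambda>k. s * c k + t * d k"])
       (auto simp: root_comb_def fun_eq_iff sum_distrib_left sum.distrib algebra_simps)
qed

lemma dihedral_factorization:
  assumes w: "w \<in> W" and j: "wlen (r j \<circ> w) < wlen w"
  obtains ys x where "set ys \<subseteq> {i, j}" "x \<in> W" "wprod ys \<circ> x = w" "wlen x + length ys = wlen w"
    "wlen x < wlen w" "\<And>k. k \<in> {i, j} \<Longrightarrow> wlen x \<le> wlen (r k \<circ> x)"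
proof -
  text \<open>Among all factorisations \<open>w = w\<^sub>y\<^sub>s \<circ> x\<close> with lengths adding up, take one with \<open>x\<close> shortest.\<close>
  define S where "S = {(ys, x). set ys \<subseteq> {i, j} \<and> x \<in> W \<and> wprod ys \<circ> x = w \<and> wlen x + length ys = wlen w}"
  have "wlen w \<le> wlen (r j \<circ> w) + 1"
    using wlen_r_comp_le[OF r_comp_in_W[OF w, of j], of j] by simp
  then have jS: "([j], r j \<circ> w) \<in> S" unfolding S_def using j r_comp_in_W[OF w] by (auto simp: fun_eq_iff)
  obtain ys x where yx: "(ys, x) \<in> S" and least: "\<And>ys' x'. (ys', x') \<in> S \<Longrightarrow> wlen x \<le> wlen x'"
    using ex_has_least_nat[of "\<lambda>p. p \<in> S", OF jS, of "\<lambda>p. wlen (snd p)"] by auto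
  have ys: "set ys \<subseteq> {i, j}" and x: "x \<in> W" and wyx: "wprod ys \<circ> x = w"
    and len: "wlen x + length ys = wlen w"
    using yx unfolding S_def by auto
  have "wlen x < wlen w" using least[OF jS] j by simp
  moreover have "wlen x \<le> wlen (r k \<circ> x)" if "k \<in> {i, j}" for k
  proof (rule ccontr)
    assume "\<not> wlen x \<le> wlen (r k \<circ> x)"
    then have lt: "wlen (r k \<circ> x) < wlen x" by simp
    have rkx: "r k \<circ> x \<in> W" using x by (rule r_comp_in_W)
    have e: "wprod (ys @ [k]) \<circ> (r k \<circ> x) = w" using wyx by (simp add: wprod_append fun_eq_iff)
    then have "wlen w \<le> wlen (wprod (ys @ [k])) + wlen (r k \<circ> x)" using wlen_comp_le[OF _ rkx] by force
    also have "\<dots> \<le> length ys + 1 + wlen (r k \<circ> x)" using wlen_wprod_le[of "ys @ [k]"] by simp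
    finally have "wlen (r k \<circ> x) + length (ys @ [k]) = wlen w" using lt len by simp
    then have "(ys @ [k], r k \<circ> x) \<in> S" unfolding S_def using ys that rkx e by auto
    then show False using least lt by fastforce
  qed
  ultimately show ?thesis using that ys x wyx len by blast
qed

lemma root_nonneg_if_wlen_le:
  "w \<in> W \<Longrightarrow> wlen w \<le> wlen (r i \<circ> w) \<Longrightarrow> nonneg_comb (\<lambda>v. rt i \<bullet> w v)"
proof (induction "wlen w" arbitrary: w i rule: less_induct)
  case less
  note w = \<open>w \<in> W\<close> and i = \<open>wlen w \<le> wlen (r i \<circ> w)\<close>
  show ?case
  proof (cases "wlen w = 0")
    case True
    then show ?thesis using wlen_eq_0[OF w] nonneg_comb_rt by simp
  next
    case False
    obtain js where js: "wprod js = w" "length js = wlen w" using reduced_word_exists[OF w] by metis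
    then obtain j js' where "js = j # js'" using False by (cases js) auto
    then have "w = r j \<circ> wprod js'" using js by simp
    then have "r j \<circ> w = wprod js'" by simp
    then have j: "wlen (r j \<circ> w) < wlen w" using wlen_wprod_le[of js'] js False \<open>js = j # js'\<close> by simp
    with i have ij: "i \<noteq> j" by auto
    obtain ys x where ys: "set ys \<subseteq> {i, j}" and x: "x \<in> W" and wyx: "wprod ys \<circ> x = w"
      and len: "wlen x + length ys = wlen w" and shorter: "wlen x < wlen w"
      and x_min: "\<And>k. k \<in> {i, j} \<Longrightarrow> wlen x \<le> wlen (r k \<circ> x)"
      by (rule dihedral_factorization[OF w j, of i]) blast
    have wlen_wprod_x: "wlen (wprod zs \<circ> x) \<le> length zs + wlen x" for zs
      using wlen_comp_le[OF wprod_in_W x, of zs] wlen_wprod_le[of zs] by simp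
    have "length ys \<le> length zs" if "wprod zs = wprod ys" for zs
      using that wlen_wprod_x[of zs] wyx len by simp
    moreover have "length ys \<le> length zs" if "wprod zs = r i \<circ> wprod ys" for zs
    proof -
      have "r i \<circ> w = wprod zs \<circ> x" using that wyx by (simp add: comp_assoc)
      then show ?thesis using wlen_wprod_x[of zs] i len by simp
    qed
    ultimately obtain s t where st: "s \<ge> 0" "t \<ge> 0"
      "\<And>v. rt i \<bullet> wprod ys v = s * (rt i \<bullet> v) + t * (rt j \<bullet> v)"
      using rank2_root_nonneg[OF ij ys] by blast
    have "(\<lambda>v. rt i \<bullet> w v) = (\<lambda>v. s * (rt i \<bullet> x v) + t * (rt j \<bullet> x v))"
      by (simp add: wyx[symmetric] st(3))
    moreover have "nonneg_comb (\<lambda>v. rt k \<bullet> x v)" if "k \<in> {i, j}" for k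
      using less.hyps[OF shorter x x_min[OF that]] .
    ultimately show ?thesis using nonneg_comb_lincomb st(1,2) by simp
  qed
qed

lemma root_sign_cases:
  assumes "w \<in> W"
  shows "nonneg_comb (\<lambda>v. rt i \<bullet> w v) \<or> nonneg_comb (\<lambda>v. - (rt i \<bullet> w v))"
proof (cases "wlen w \<le> wlen (r i \<circ> w)")
  case True
  then show ?thesis using root_nonneg_if_wlen_le assms by blast
next
  case False
  have "r i \<circ> (r i \<circ> w) = w" by (simp add: fun_eq_iff)
  then have "nonneg_comb (\<lambda>v. rt i \<bullet> r i (w v))"
    using root_nonneg_if_wlen_le[OF r_comp_in_W[OF assms], of i] False by simp
  then show ?thesis by (simp add: rt_r_self)
qed

end

section \<open>Lattices\<close>

lemma Yset_inner_Ints: "u \<in> Yset \<Longrightarrow> v \<in> Yset \<Longrightarrow> u \<bullet> v \<in> \<int>"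
  unfolding Yset_def inner_vec_def by (auto intro!: Ints_mult)

lemma Yset_add: "u \<in> Yset \<Longrightarrow> v \<in> Yset \<Longrightarrow> u + v \<in> Yset"
  by (auto simp: Yset_def)

lemma Yset_diff: "u \<in> Yset \<Longrightarrow> v \<in> Yset \<Longrightarrow> u - v \<in> Yset"
  by (auto simp: Yset_def)

lemma Yset_scaleR: "c \<in> \<int> \<Longrightarrow> v \<in> Yset \<Longrightarrow> c *\<^sub>R v \<in> Yset"
  by (auto simp: Yset_def)

lemma mem_Qcor: "v \<in> Qcor f \<longleftrightarrow> (\<exists>n. v = (\<Sum>i\<in>UNIV. of_int (n i) *\<^sub>R f i))"
  by (auto simp: Qcor_def)

lemma mem_Qcor_plus: "v \<in> Qcor_plus f \<longleftrightarrow> (\<exists>n. v = (\<Sum>i\<in>UNIV. of_nat (n i) *\<^sub>R f i))"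
  by (auto simp: Qcor_plus_def)

lemma zero_in_Qcor_plus: "0 \<in> Qcor_plus f"
  unfolding mem_Qcor_plus by (rule exI[of _ "\<lambda>i. 0"]) simp

lemma Qcor_add: "u \<in> Qcor f \<Longrightarrow> v \<in> Qcor f \<Longrightarrow> u + v \<in> Qcor f"
proof -
  assume "u \<in> Qcor f" "v \<in> Qcor f"
  then obtain n m where "u = (\<Sum>i\<in>UNIV. of_int (n i) *\<^sub>R f i)" "v = (\<Sum>i\<in>UNIV. of_int (m i) *\<^sub>R f i)"
    unfolding mem_Qcor by blast
  then have "u + v = (\<Sum>i\<in>UNIV. of_int (n i + m i) *\<^sub>R f i)"
    by (simp add: scaleR_add_left sum.distrib)
  then show ?thesis unfolding mem_Qcor by (rule exI[of _ "\<lambda>i. n i + m i"])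
qed

lemma Qcor_uminus: "u \<in> Qcor f \<Longrightarrow> - u \<in> Qcor f"
proof -
  assume "u \<in> Qcor f"
  then obtain n where "u = (\<Sum>i\<in>UNIV. of_int (n i) *\<^sub>R f i)" unfolding mem_Qcor by blast
  then have "- u = (\<Sum>i\<in>UNIV. of_int (- n i) *\<^sub>R f i)" by (simp add: sum_negf[symmetric])
  then show ?thesis unfolding mem_Qcor by (rule exI[of _ "\<lambda>i. - n i"])
qed

lemma Qcor_plus_add: "u \<in> Qcor_plus f \<Longrightarrow> v \<in> Qcor_plus f \<Longrightarrow> u + v \<in> Qcor_plus f"
proof -
  assume "u \<in> Qcor_plus f" "v \<in> Qcor_plus f"
  then obtain n m where "u = (\<Sum>i\<in>UNIV. of_nat (n i) *\<^sub>R f i)" "v = (\<Sum>i\<in>UNIV. of_nat (m i) *\<^sub>R f i)"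
    unfolding mem_Qcor_plus by blast
  then have "u + v = (\<Sum>i\<in>UNIV. of_nat (n i + m i) *\<^sub>R f i)"
    by (simp add: scaleR_add_left sum.distrib)
  then show ?thesis unfolding mem_Qcor_plus by (rule exI[of _ "\<lambda>i. n i + m i"])
qed

lemma Qcor_plus_subset_Qcor: "Qcor_plus f \<subseteq> Qcor f"
proof
  fix u assume "u \<in> Qcor_plus f"
  then obtain n where "u = (\<Sum>i\<in>UNIV. of_nat (n i) *\<^sub>R f i)" unfolding mem_Qcor_plus by blast
  then have "u = (\<Sum>i\<in>UNIV. of_int (int (n i)) *\<^sub>R f i)" by simp
  then show "u \<in> Qcor f" unfolding mem_Qcor by (rule exI[of _ "\<lambda>i. int (n i)"])
qed

lemma scaleR_in_Qcor: "c \<in> \<int> \<Longrightarrow> c *\<^sub>R f j \<in> Qcor f"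
proof -
  assume "c \<in> \<int>"
  then obtain N where N: "c = of_int N" by (auto elim: Ints_cases)
  have "(\<Sum>i\<in>UNIV. of_int (if i = j then N else 0) *\<^sub>R f i) = (\<Sum>i\<in>UNIV. if i = j then c *\<^sub>R f i else 0)"
    by (rule sum.cong) (auto simp: N)
  also have "\<dots> = c *\<^sub>R f j" by simp
  finally show ?thesis unfolding mem_Qcor by (metis (no_types))
qed

lemma scaleR_in_Qcor_plus: "c \<in> \<nat> \<Longrightarrow> c *\<^sub>R f j \<in> Qcor_plus f"
proof -
  assume "c \<in> \<nat>"
  then obtain N where N: "c = of_nat N" by (auto elim: Nats_cases)
  have "(\<Sum>i\<in>UNIV. of_nat (if i = j then N else 0) *\<^sub>R f i) = (\<Sum>i\<in>UNIV. if i = j then c *\<^sub>R f i else 0)"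
    by (rule sum.cong) (auto simp: N)
  also have "\<dots> = c *\<^sub>R f j" by simp
  finally show ?thesis unfolding mem_Qcor_plus by (metis (no_types))
qed

lemma Qcor_subset_Yset:
  assumes "\<And>i. f i \<in> Yset"
  shows "Qcor f \<subseteq> Yset"
proof
  fix u assume "u \<in> Qcor f"
  then obtain n where "u = (\<Sum>i\<in>UNIV. of_int (n i) *\<^sub>R f i)" by (auto simp: mem_Qcor)
  moreover have "(\<Sum>i\<in>F. of_int (n i) *\<^sub>R f i) \<in> Yset" for F
  proof (induction F rule: infinite_finite_induct)
    case (insert a F)
    then show ?case by (simp add: Yset_add Yset_scaleR assms)
  qed (simp_all add: Yset_def)
  ultimately show "u \<in> Yset" by simp
qed

lemma Qcor_plus_antisym:
  assumes "free_family f" "u \<in> Qcor_plus f" "- u \<in> Qcor_plus f"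
  shows "u = 0"
proof -
  obtain n m where n: "u = (\<Sum>i\<in>UNIV. of_nat (n i) *\<^sub>R f i)" and m: "- u = (\<Sum>i\<in>UNIV. of_nat (m i) *\<^sub>R f i)"
    using assms(2,3) unfolding mem_Qcor_plus by blast
  have "(\<Sum>i\<in>UNIV. of_int (int (n i + m i)) *\<^sub>R f i) = u + - u"
    by (simp add: n m[unfolded n] scaleR_add_left sum.distrib)
  also have "\<dots> = 0" by simp
  finally have "int (n i + m i) = 0" for i
    by (rule assms(1)[unfolded free_family_def, rule_format])
  then have "n i = 0" for i by (metis add_is_0 of_nat_eq_0_iff)
  then show ?thesis using n by simp
qed

lemma rat_common_denominator:
  fixes q :: "'i \<Rightarrow> rat"
  assumes "finite S"
  shows "\<exists>d::int. d > 0 \<and> (\<forall>i\<in>S. \<exists>n::int. q i * of_int d = of_int n)"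
  using assms
proof induction
  case (insert i S)
  then obtain d where d: "d > 0" "\<forall>j\<in>S. \<exists>n::int. q j * of_int d = of_int n" by blast
  obtain a b where ab: "quotient_of (q i) = (a, b)" by fastforce
  have b: "b > 0" "q i = of_int a / of_int b"
    using quotient_of_denom_pos[OF ab] quotient_of_div[OF ab] by auto
  have "\<exists>n::int. q j * of_int (d * b) = of_int n" if j: "j \<in> insert i S" for j
  proof (cases "j = i")
    case True
    then have "q j * of_int (d * b) = of_int (a * d)" using b by (simp add: field_simps)
    then show ?thesis by blast
  next
    case False
    then obtain n where "q j * of_int d = of_int n" using d j by auto
    then have "q j * of_int (d * b) = of_int (n * b)" by (simp add: algebra_simps)
    then show ?thesis by blast
  qed
  then show ?case using d b by (intro exI[of _ "d * b"]) auto
qed (intro exI[of _ 1], auto)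

lemma free_family_rat_independent:
  fixes f :: "'i::finite \<Rightarrow> real^'d"
  assumes free: "free_family f" and q: "(\<Sum>i\<in>UNIV. of_rat (q i) *\<^sub>R f i) = 0"
  shows "q i0 = 0"
proof -
  obtain d where d: "d > 0" "\<forall>i\<in>UNIV. \<exists>n::int. q i * of_int d = of_int n"
    using rat_common_denominator[of UNIV q] by auto
  then have "\<forall>i. \<exists>n::int. q i * of_int d = of_int n" by simp
  then obtain n where n: "\<And>i. q i * of_int d = of_int (n i)" by (metis choice)
  have "(of_int (n i) :: real) = of_int d * of_rat (q i)" for i
    using arg_cong[OF n[of i], of "of_rat :: rat \<Rightarrow> real"] by (simp add: of_rat_mult mult.commute)
  then have "(\<Sum>i\<in>UNIV. of_int (n i) *\<^sub>R f i) = of_int d *\<^sub>R (\<Sum>i\<in>UNIV. of_rat (q i) *\<^sub>R f i)"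
    by (simp add: scaleR_sum_right)
  also have "\<dots> = 0" using q by simp
  finally have "n i0 = 0" using free unfolding free_family_def by blast
  then show ?thesis using n[of i0] d(1) by simp
qed

text \<open>A \<open>\<rat>\<close>-linear functional \<open>g\<close> on \<open>\<real>\<close> with \<open>g (c i\<^sub>0) = 1\<close> turns a real relation among
integral vectors into a rational one.\<close>

lemma free_family_real_independent:
  fixes f :: "'i::finite \<Rightarrow> real^'d"
  assumes fY: "\<And>i. f i \<in> Yset" and free: "free_family f"
    and c: "(\<Sum>i\<in>UNIV. c i *\<^sub>R f i) = 0"
  shows "c i0 = 0"
proof (rule ccontr)
  assume "c i0 \<noteq> 0"
  interpret vsp: vector_space_pair "\<lambda>q (x::real). of_rat q * x" "(*) :: rat \<Rightarrow> rat \<Rightarrow> rat"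
    by unfold_locales (simp_all add: algebra_simps of_rat_add of_rat_mult)
  have "vsp.vs1.independent {c i0}" using \<open>c i0 \<noteq> 0\<close> by simp
  then obtain g where g: "Vector_Spaces.linear (\<lambda>q (x::real). of_rat q * x) ((*) :: rat \<Rightarrow> rat \<Rightarrow> rat) g"
      "g (c i0) = 1"
    using vsp.linear_independent_extend[of "{c i0}" "\<lambda>_. 1"] by auto
  then interpret g: module_hom "\<lambda>q (x::real). of_rat q * x" "(*) :: rat \<Rightarrow> rat \<Rightarrow> rat" g
    by (simp add: module_hom_iff_linear)
  have g_int: "g (of_int n * x) = of_int n * g x" for n x
    using g.scale[of "of_int n" x] by simp
  have "\<forall>i m. \<exists>n. f i $ m = of_int n"
  proof (intro allI)
    fix i m
    have "f i $ m \<in> \<int>" using fY[of i] by (simp add: Yset_def)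
    then show "\<exists>n. f i $ m = of_int n" by (auto elim: Ints_cases)
  qed
  then obtain z where z: "\<And>i m. f i $ m = of_int (z i m)" by metis
  have "(\<Sum>i\<in>UNIV. of_rat (g (c i)) *\<^sub>R f i) = (0::real^'d)"
  proof (subst vec_eq_iff, intro allI)
    fix m
    have "(\<Sum>i\<in>UNIV. of_int (z i m) * c i) = 0"
      using arg_cong[OF c, of "\<lambda>v. v $ m"] z by (simp add: mult.commute)
    then have "g (\<Sum>i\<in>UNIV. of_int (z i m) * c i) = 0" using g.zero by simp
    then have "(\<Sum>i\<in>UNIV. of_int (z i m) * g (c i)) = 0" by (simp add: g.sum g_int)
    then have "(of_rat (\<Sum>i\<in>UNIV. of_int (z i m) * g (c i)) :: real) = 0" by (simp only: of_rat_0)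
    then show "(\<Sum>i\<in>UNIV. of_rat (g (c i)) *\<^sub>R f i) $ m = (0::real^'d) $ m"
      by (simp add: z of_rat_sum of_rat_mult mult.commute)
  qed
  then have "g (c i0) = 0" by (rule free_family_rat_independent[OF free])
  then show False using g(2) by simp
qed

lemma convex_minus_nonneg_cone:
  "convex {x0 - (\<Sum>k\<in>UNIV. c k *\<^sub>R f k) | c. \<forall>k. 0 \<le> c k}"
  unfolding convex_alt
proof (intro ballI allI impI)
  fix x y and u :: real
  assume x: "x \<in> {x0 - (\<Sum>k\<in>UNIV. c k *\<^sub>R f k) | c. \<forall>k. 0 \<le> c k}"
    and y: "y \<in> {x0 - (\<Sum>k\<in>UNIV. c k *\<^sub>R f k) | c. \<forall>k. 0 \<le> c k}" and u: "0 \<le> u \<and> u \<le> 1"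
  obtain c where c: "\<forall>k. 0 \<le> c k" "x = x0 - (\<Sum>k\<in>UNIV. c k *\<^sub>R f k)" using x by blast
  obtain d where d: "\<forall>k. 0 \<le> d k" "y = x0 - (\<Sum>k\<in>UNIV. d k *\<^sub>R f k)" using y by blast
  have "(\<Sum>k\<in>UNIV. ((1 - u) * c k + u * d k) *\<^sub>R f k)
      = (1 - u) *\<^sub>R (\<Sum>k\<in>UNIV. c k *\<^sub>R f k) + u *\<^sub>R (\<Sum>k\<in>UNIV. d k *\<^sub>R f k)"
    by (simp add: scaleR_add_left sum.distrib scaleR_sum_right)
  then have "(1 - u) *\<^sub>R x + u *\<^sub>R y = x0 - (\<Sum>k\<in>UNIV. ((1 - u) * c k + u * d k) *\<^sub>R f k)"
    unfolding c(2) d(2) by (simp add: algebra_simps)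
  moreover have "\<forall>k. 0 \<le> (1 - u) * c k + u * d k" using c(1) d(1) u by simp
  ultimately show "(1 - u) *\<^sub>R x + u *\<^sub>R y \<in> {x0 - (\<Sum>k\<in>UNIV. c k *\<^sub>R f k) | c. \<forall>k. 0 \<le> c k}"
    unfolding mem_Collect_eq by (intro exI[of _ "\<lambda>k. (1 - u) * c k + u * d k"]) simp
qed

context kac_moody
begin

lemma r_Yset: "v \<in> Yset \<Longrightarrow> r i v \<in> Yset"
  unfolding r_eq by (intro Yset_diff Yset_scaleR Yset_inner_Ints rt_in_Yset cor_in_Yset)

lemma W_Yset: "w \<in> W \<Longrightarrow> v \<in> Yset \<Longrightarrow> w v \<in> Yset"
  by (induction rule: kmr_W.induct) (auto intro: r_Yset)

lemma W_minus_in_Qcor: "w \<in> W \<Longrightarrow> v \<in> Yset \<Longrightarrow> w v - v \<in> Qcor cor"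
proof (induction rule: kmr_W.induct)
  case id
  then show ?case using Qcor_plus_subset_Qcor zero_in_Qcor_plus by force
next
  case (step w i)
  have "(r i \<circ> w) v - v = (w v - v) + - ((rt i \<bullet> w v) *\<^sub>R cor i)"
    by (simp add: r_eq)
  also have "\<dots> \<in> Qcor cor"
    using step W_Yset[OF step.hyps(1) step.prems]
    by (intro Qcor_add Qcor_uminus scaleR_in_Qcor Yset_inner_Ints rt_in_Yset) simp_all
  finally show ?case .
qed

definition chamber :: "(real^'d) set" where
  "chamber = {v. \<forall>i. 0 \<le> rt i \<bullet> v}"

lemma nonneg_comb_nonneg_on_chamber: "nonneg_comb g \<Longrightarrow> x \<in> chamber \<Longrightarrow> 0 \<le> g x"
  unfolding nonneg_comb_def root_comb_def chamber_def by (auto intro!: sum_nonneg)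

lemma chamber_minus_W_in_Qcor_plus:
  assumes x: "x \<in> Yset" "x \<in> chamber"
  shows "w \<in> W \<Longrightarrow> x - w x \<in> Qcor_plus cor"
proof (induction "wlen w" arbitrary: w rule: less_induct)
  case less
  show ?case
  proof (cases "wlen w = 0")
    case True
    then show ?thesis using wlen_eq_0[OF less.prems] zero_in_Qcor_plus by simp
  next
    case False
    obtain js where js: "wprod js = w" "length js = wlen w"
      using reduced_word_exists[OF less.prems] by metis
    then obtain j js' where "js = j # js'" using False by (cases js) auto
    define w' where "w' = wprod js'"
    have w: "w = r j \<circ> w'" using js \<open>js = j # js'\<close> unfolding w'_def by simp
    have w': "w' \<in> W" "wlen w' < wlen w"
      using wlen_wprod_le[of js'] js \<open>js = j # js'\<close> unfolding w'_def by auto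
    moreover have "wlen w \<le> wlen w' + 1" using wlen_r_comp_le[OF w'(1), of j] w by simp
    ultimately have "wlen w' \<le> wlen (r j \<circ> w')" using w by simp
    then have "0 \<le> rt j \<bullet> w' x"
      using nonneg_comb_nonneg_on_chamber[OF root_nonneg_if_wlen_le[OF w'(1)] x(2)] by simp
    moreover have "rt j \<bullet> w' x \<in> \<int>" by (rule Yset_inner_Ints[OF rt_in_Yset W_Yset[OF w'(1) x(1)]])
    ultimately have "(rt j \<bullet> w' x) *\<^sub>R cor j \<in> Qcor_plus cor"
      by (intro scaleR_in_Qcor_plus) (simp add: Nats_altdef2)
    moreover have "x - w x = (x - w' x) + (rt j \<bullet> w' x) *\<^sub>R cor j" using w by (simp add: r_eq)
    moreover have "x - w' x \<in> Qcor_plus cor" using less.hyps[OF w'(2,1)] .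
    ultimately show ?thesis by (metis Qcor_plus_add)
  qed
qed

lemma chamber_W_orbit_unique:
  assumes "x \<in> Yset" "x \<in> chamber" "y \<in> Yset" "y \<in> chamber" "w \<in> W" "w x = y"
  shows "x = y"
proof -
  obtain u where u: "u \<in> W" "u \<circ> w = id" using W_inverse[OF assms(5)] by blast
  have "u y = x" using u(2) assms(6) by (metis comp_apply id_apply)
  have "x - y \<in> Qcor_plus cor" using chamber_minus_W_in_Qcor_plus[OF assms(1,2,5)] assms(6) by simp
  moreover have "- (x - y) \<in> Qcor_plus cor"
    using chamber_minus_W_in_Qcor_plus[OF assms(3,4) u(1)] \<open>u y = x\<close> by simp
  ultimately show ?thesis using Qcor_plus_antisym[OF free_cor, of "x - y"] by simp
qed

lemma rt_real_independent: "(\<Sum>i\<in>UNIV. c i *\<^sub>R rt i) = 0 \<Longrightarrow> c k = 0"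
  by (rule free_family_real_independent[OF rt_in_Yset free_rt])

lemma cor_real_independent: "(\<Sum>i\<in>UNIV. c i *\<^sub>R cor i) = 0 \<Longrightarrow> c k = 0"
  by (rule free_family_real_independent[OF cor_in_Yset free_cor])

lemma exists_rt_eq_1: "\<exists>v. \<forall>k. rt k \<bullet> v = 1"
proof -
  define S where "S = (\<lambda>c::real^'i. (\<Sum>l\<in>UNIV. (c $ l) *\<^sub>R rt l))"
  define T where "T = (\<lambda>c::real^'i. (\<chi> k. rt k \<bullet> S c))"
  have linT: "linear T"
    unfolding T_def S_def
    by (rule linearI) (simp_all add: vec_eq_iff inner_sum_right inner_add_right scaleR_add_left
        sum.distrib sum_distrib_left algebra_simps)
  have "inj T"
  proof (rule linear_inj_iff_eq_0[THEN iffD2, OF linT], intro allI impI)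
    fix c assume "T c = 0"
    then have "rt k \<bullet> S c = 0" for k unfolding T_def by (simp add: vec_eq_iff)
    then have "S c \<bullet> S c = 0" by (simp add: S_def inner_sum_left)
    then have "S c = 0" by simp
    then have "c $ l = 0" for l unfolding S_def by (rule rt_real_independent)
    then show "c = 0" by (simp add: vec_eq_iff)
  qed
  then have "surj T" using linear_injective_imp_surjective[OF linT] by simp
  then obtain c where "T c = (\<chi> k. 1)" by (metis surjE)
  then have "rt k \<bullet> S c = 1" for k unfolding T_def by (simp add: vec_eq_iff)
  then show ?thesis by blast
qed

lemma closure_Cf_eq_chamber: "closure (Cf rt) = chamber"
proof
  show "closure (Cf rt) \<subseteq> chamber"
    by (rule closure_minimal)
       (auto simp: Cf_def chamber_def less_imp_le intro!: closed_Collect_all closed_halfspace_ge)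
next
  show "chamber \<subseteq> closure (Cf rt)"
  proof
    fix v assume v: "v \<in> chamber"
    obtain v1 where v1: "\<forall>k. rt k \<bullet> v1 = 1" using exists_rt_eq_1 by blast
    have "v + t *\<^sub>R v1 \<in> Cf rt" if "t > 0" for t :: real
      using v v1 that unfolding Cf_def chamber_def by (auto simp: inner_add_right add_nonneg_pos)
    moreover have "(\<lambda>n. v + inverse (real (Suc n)) *\<^sub>R v1) \<longlonglongrightarrow> v"
      using tendsto_add[OF tendsto_const tendsto_scaleR[OF LIMSEQ_inverse_real_of_nat tendsto_const]]
      by simp
    ultimately show "v \<in> closure (Cf rt)"
      unfolding closure_sequential by (intro exI[of _ "\<lambda>n. v + inverse (real (Suc n)) *\<^sub>R v1"]) auto
  qed
qed

end

section \<open>The Tits cone\<close>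

definition ray :: "('a \<Rightarrow> real) \<Rightarrow> ('a \<Rightarrow> real) set" where
  "ray g = {(\<lambda>v. t * g v) | t. t > 0}"

lemma ray_scale: "t > 0 \<Longrightarrow> ray (\<lambda>v. t * g v) = ray g"
proof (intro set_eqI iffI)
  fix f assume t: "t > 0"
  show "f \<in> ray g" if f: "f \<in> ray (\<lambda>v. t * g v)"
  proof -
    obtain s where "s > 0" "f = (\<lambda>v. s * (t * g v))" using f unfolding ray_def by blast
    then show ?thesis using t unfolding ray_def by (intro CollectI exI[of _ "s * t"]) auto
  qed
  show "f \<in> ray (\<lambda>v. t * g v)" if f: "f \<in> ray g"
  proof -
    obtain s where "s > 0" "f = (\<lambda>v. s * g v)" using f unfolding ray_def by blast
    then show ?thesis using t unfolding ray_def by (intro CollectI exI[of _ "s / t"]) auto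
  qed
qed

lemma ray_comp: "ray (g \<circ> u) = (\<lambda>f. f \<circ> u) ` ray g"
  unfolding ray_def by (auto simp: comp_def)

lemma ray_eq_imp_positive_multiple: "ray g = ray h \<Longrightarrow> \<exists>t>0. g = (\<lambda>v. t * h v)"
proof -
  assume "ray g = ray h"
  moreover have "g \<in> ray g" unfolding ray_def by (intro CollectI exI[of _ 1]) simp
  ultimately show ?thesis unfolding ray_def by auto
qed

context kac_moody
begin

abbreviation Tits where "Tits \<equiv> tits_cone cor rt"

lemma mem_Tits: "x \<in> Tits \<longleftrightarrow> (\<exists>w\<in>W. \<exists>y\<in>chamber. x = w y)"
  unfolding tits_cone_def closure_Cf_eq_chamber by blast

lemma chamber_subset_Tits: "chamber \<subseteq> Tits"
  by (auto simp: mem_Tits intro!: bexI[OF _ id_in_W])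

lemma W_Tits: "w \<in> W \<Longrightarrow> x \<in> Tits \<Longrightarrow> w x \<in> Tits"
  unfolding mem_Tits by (metis W_comp comp_apply)

lemma Tits_scaleR: "x \<in> Tits \<Longrightarrow> c > 0 \<Longrightarrow> c *\<^sub>R x \<in> Tits"
proof -
  assume "x \<in> Tits" "c > 0"
  then obtain w y where wy: "w \<in> W" "y \<in> chamber" "x = w y" unfolding mem_Tits by blast
  have "c *\<^sub>R y \<in> chamber" using wy(2) \<open>c > 0\<close> by (simp add: chamber_def)
  moreover have "c *\<^sub>R x = w (c *\<^sub>R y)" using wy W_linear[OF wy(1)] by (simp add: linear_scale)
  ultimately show ?thesis unfolding mem_Tits using wy(1) by blast
qed

lemma root_comb_eq_inner: "root_comb c v = (\<Sum>k\<in>UNIV. c k *\<^sub>R rt k) \<bullet> v"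
  by (simp add: root_comb_def inner_sum_left)

lemma root_comb_inj:
  assumes "root_comb c = root_comb d"
  shows "c k = d k"
proof -
  let ?u = "\<Sum>k\<in>UNIV. (c k - d k) *\<^sub>R rt k"
  have "?u \<bullet> v = 0" for v
    using fun_cong[OF assms, of v]
    by (simp add: root_comb_eq_inner scaleR_diff_left sum_subtractf inner_diff_left)
  then have "?u = 0" using inner_eq_zero_iff by blast
  then show ?thesis using rt_real_independent[of "\<lambda>k. c k - d k" k] by simp
qed

lemma root_comb_uminus: "root_comb (\<lambda>k. - d k) = (\<lambda>v. - root_comb d v)"
  by (simp add: root_comb_def fun_eq_iff sum_negf)

lemma root_comb_single:
  assumes "\<And>k. k \<noteq> i \<Longrightarrow> c k = 0"
  shows "root_comb c = (\<lambda>v. c i * (rt i \<bullet> v))"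
proof
  fix v
  have "root_comb c v = (\<Sum>k\<in>UNIV. if k = i then c k * (rt k \<bullet> v) else 0)"
    unfolding root_comb_def by (rule sum.cong) (use assms in auto)
  then show "root_comb c v = c i * (rt i \<bullet> v)" by simp
qed

lemma root_comb_fun_upd: "root_comb (c(i := a)) v = root_comb c v + (a - c i) * (rt i \<bullet> v)"
proof -
  have "root_comb (c(i := a)) v
      = (\<Sum>k\<in>UNIV. c k * (rt k \<bullet> v) + (if k = i then (a - c i) * (rt k \<bullet> v) else 0))"
    unfolding root_comb_def by (rule sum.cong) (auto simp: algebra_simps)
  then show ?thesis unfolding root_comb_def by (simp add: sum.distrib)
qed

lemma root_comb_r: "root_comb c (r i v) = root_comb c v - (rt i \<bullet> v) * root_comb c (cor i)"
  unfolding root_comb_def r_eq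
  by (simp add: inner_diff_right sum_subtractf sum_distrib_left algebra_simps)

lemma root_comb_lincomb: "root_comb c (a *\<^sub>R x + b *\<^sub>R y) = a * root_comb c x + b * root_comb c y"
  by (simp add: root_comb_eq_inner inner_add_right)

definition real_roots :: "(real^'d \<Rightarrow> real) set" where
  "real_roots = {(\<lambda>v. rt i \<bullet> w v) | i w. w \<in> W}"

definition pos_roots :: "(real^'d \<Rightarrow> real) set" where
  "pos_roots = {g \<in> real_roots. nonneg_comb g}"

definition neg_rays :: "real^'d \<Rightarrow> (real^'d \<Rightarrow> real) set set" where
  "neg_rays h = ray ` {g \<in> pos_roots. g h < 0}"

definition inversion_set :: "'i list \<Rightarrow> (real^'d \<Rightarrow> real) set" where
  "inversion_set l = {g \<in> pos_roots. g \<circ> wprod l \<notin> pos_roots}"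

lemma real_roots_comp_W:
  assumes "g \<in> real_roots" "u \<in> W"
  shows "g \<circ> u \<in> real_roots"
proof -
  obtain i w where "w \<in> W" "g = (\<lambda>v. rt i \<bullet> w v)" using assms(1) unfolding real_roots_def by blast
  then have "g \<circ> u = (\<lambda>v. rt i \<bullet> (w \<circ> u) v)" "w \<circ> u \<in> W" using W_comp assms(2) by auto
  then show ?thesis unfolding real_roots_def by blast
qed

lemma rt_in_pos_roots: "(\<lambda>v. rt i \<bullet> v) \<in> pos_roots"
proof -
  have "(\<lambda>v. rt i \<bullet> v) = (\<lambda>v. rt i \<bullet> id v)" by simp
  then show ?thesis unfolding pos_roots_def real_roots_def using nonneg_comb_rt[of i] id_in_W by blast
qed

lemma real_root_sign: "g \<in> real_roots \<Longrightarrow> g \<in> pos_roots \<or> nonneg_comb (\<lambda>v. - g v)"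
  unfolding pos_roots_def real_roots_def using root_sign_cases by blast

lemma real_root_nonzero: "g \<in> real_roots \<Longrightarrow> \<exists>v. g v \<noteq> 0"
proof -
  assume "g \<in> real_roots"
  then obtain i w where iw: "w \<in> W" "g = (\<lambda>v. rt i \<bullet> w v)" unfolding real_roots_def by blast
  obtain u where "u \<in> W" "w \<circ> u = id" using W_inverse[OF iw(1)] by blast
  then have "g (u (cor i)) = 2" using iw(2) A_diag rt_cor[of i i] by (metis comp_apply id_apply of_int_numeral)
  then show ?thesis by (intro exI[of _ "u (cor i)"]) simp
qed

lemma pos_root_multiple_rt:
  assumes "g \<in> pos_roots" "g = (\<lambda>v. t * (rt i \<bullet> v))"
  shows "t > 0"
proof -
  obtain c where c: "\<forall>k. 0 \<le> c k" "g = root_comb c" "g \<in> real_roots"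
    using assms(1) unfolding pos_roots_def nonneg_comb_def by blast
  have "root_comb (\<lambda>k. if k = i then t else 0) = g"
    using root_comb_single[of i "\<lambda>k. if k = i then t else 0"] assms(2) by simp
  then have "c i = t" using root_comb_inj[of c "\<lambda>k. if k = i then t else 0" i] c(2) by simp
  moreover have "t \<noteq> 0" using real_root_nonzero[OF c(3)] assms(2) by auto
  ultimately show ?thesis using c(1) by (metis order_le_less)
qed

text \<open>A positive root that is not a multiple of \<open>\<alpha>\<^sub>i\<close> has a positive coefficient off \<open>i\<close>, which
\<open>r\<^sub>i\<close> does not change; so it cannot become negative.\<close>

lemma pos_root_comp_r:
  assumes g: "g \<in> pos_roots" and not_multiple: "\<nexists>t. g = (\<lambda>v. t * (rt i \<bullet> v))"
  shows "g \<circ> r i \<in> pos_roots"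
proof -
  obtain c where c: "\<forall>k. 0 \<le> c k" "g = root_comb c" "g \<in> real_roots"
    using g unfolding pos_roots_def nonneg_comb_def by blast
  obtain k where k: "k \<noteq> i" "c k \<noteq> 0"
    using not_multiple root_comb_single[of i c] c(2) by blast
  define c' where "c' = c(i := c i - root_comb c (cor i))"
  have gr: "g \<circ> r i = root_comb c'"
    unfolding c'_def c(2) by (simp add: fun_eq_iff root_comb_fun_upd root_comb_r algebra_simps)
  have "\<not> nonneg_comb (\<lambda>v. - (g \<circ> r i) v)"
  proof
    assume "nonneg_comb (\<lambda>v. - (g \<circ> r i) v)"
    then obtain d where d: "\<forall>k. 0 \<le> d k" "(\<lambda>v. - (g \<circ> r i) v) = root_comb d"
      unfolding nonneg_comb_def by blast
    have "root_comb c' = root_comb (\<lambda>k. - d k)"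
      unfolding root_comb_uminus d(2)[symmetric] gr[symmetric] by (simp add: comp_def)
    then have "c' k = - d k" by (rule root_comb_inj)
    then have "c k = - d k" using k(1) by (simp add: c'_def)
    then have "c k = 0" using c(1)[rule_format, of k] d(1)[rule_format, of k] by linarith
    then show False using k(2) by contradiction
  qed
  then show ?thesis using real_root_sign[OF real_roots_comp_W[OF c(3) r_in_W]] by blast
qed

lemma finite_inversion_rays: "finite (ray ` inversion_set l)"
proof (induction l)
  case Nil
  then show ?case by (simp add: inversion_set_def)
next
  case (Cons i l)
  let ?F = "\<lambda>\<rho>. (\<lambda>f. f \<circ> r i) ` \<rho>"
  have "ray ` inversion_set (i # l) \<subseteq> insert (ray (\<lambda>v. rt i \<bullet> v)) (?F ` (ray ` inversion_set l))"
  proof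
    fix \<rho> assume "\<rho> \<in> ray ` inversion_set (i # l)"
    then obtain g where g: "g \<in> pos_roots" "g \<circ> (r i \<circ> wprod l) \<notin> pos_roots" "\<rho> = ray g"
      unfolding inversion_set_def by auto
    show "\<rho> \<in> insert (ray (\<lambda>v. rt i \<bullet> v)) (?F ` (ray ` inversion_set l))"
    proof (cases "\<exists>t. g = (\<lambda>v. t * (rt i \<bullet> v))")
      case True
      then obtain t where t: "g = (\<lambda>v. t * (rt i \<bullet> v))" by blast
      then have "ray g = ray (\<lambda>v. rt i \<bullet> v)" using ray_scale pos_root_multiple_rt[OF g(1) t] by simp
      then show ?thesis using g(3) by simp
    next
      case False
      have "g \<circ> r i \<in> inversion_set l"
        using pos_root_comp_r[OF g(1) False] g(2) unfolding inversion_set_def by (simp add: comp_assoc)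
      moreover have "\<rho> = ?F (ray (g \<circ> r i))" using g(3) ray_comp[of "g \<circ> r i" "r i"] by (simp add: comp_assoc)
      ultimately show ?thesis by blast
    qed
  qed
  then show ?case by (rule finite_subset) (simp add: Cons.IH)
qed

lemma finite_neg_rays: "h \<in> Tits \<Longrightarrow> finite (neg_rays h)"
proof -
  assume "h \<in> Tits"
  then obtain w y where wy: "w \<in> W" "y \<in> chamber" "h = w y" unfolding mem_Tits by blast
  then obtain l where l: "w = wprod l" by (auto simp: W_eq_range_wprod)
  have "{g \<in> pos_roots. g h < 0} \<subseteq> inversion_set l"
  proof
    fix g assume g: "g \<in> {g \<in> pos_roots. g h < 0}"
    have "g \<circ> wprod l \<notin> pos_roots"
      using nonneg_comb_nonneg_on_chamber[OF _ wy(2), of "g \<circ> wprod l"] g wy(3) l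
      unfolding pos_roots_def by auto
    then show "g \<in> inversion_set l" using g unfolding inversion_set_def by blast
  qed
  then have "neg_rays h \<subseteq> ray ` inversion_set l" unfolding neg_rays_def by blast
  then show ?thesis using finite_inversion_rays[of l] by (rule finite_subset)
qed

lemma neg_rays_r_card_less:
  assumes fin: "finite (neg_rays z)" and neg: "rt i \<bullet> z < 0"
  shows "finite (neg_rays (r i z)) \<and> card (neg_rays (r i z)) < card (neg_rays z)"
proof -
  let ?\<alpha> = "ray (\<lambda>v. rt i \<bullet> v)" and ?F = "\<lambda>\<rho>. (\<lambda>f. f \<circ> r i) ` \<rho>"
  have mem: "?\<alpha> \<in> neg_rays z" unfolding neg_rays_def using rt_in_pos_roots neg by blast
  have incl: "neg_rays (r i z) \<subseteq> ?F ` (neg_rays z - {?\<alpha>})"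
  proof
    fix \<rho> assume "\<rho> \<in> neg_rays (r i z)"
    then obtain g where g: "g \<in> pos_roots" "g (r i z) < 0" "\<rho> = ray g" unfolding neg_rays_def by blast
    show "\<rho> \<in> ?F ` (neg_rays z - {?\<alpha>})"
    proof (cases "\<exists>t. g = (\<lambda>v. t * (rt i \<bullet> v))")
      case True
      then obtain t where t: "g = (\<lambda>v. t * (rt i \<bullet> v))" by blast
      then have "g (r i z) > 0"
        using mult_pos_neg[OF pos_root_multiple_rt[OF g(1) t] neg] by (simp add: rt_r_self)
      then show ?thesis using g(2) by simp
    next
      case False
      have "ray (g \<circ> r i) \<in> neg_rays z"
        using pos_root_comp_r[OF g(1) False] g(2) unfolding neg_rays_def by auto
      moreover have "ray (g \<circ> r i) \<noteq> ?\<alpha>"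
      proof
        assume "ray (g \<circ> r i) = ?\<alpha>"
        then obtain s where "g \<circ> r i = (\<lambda>v. s * (rt i \<bullet> v))"
          using ray_eq_imp_positive_multiple by blast
        then have "g = (\<lambda>v. (- s) * (rt i \<bullet> v))"
          by (metis (no_types, lifting) comp_apply mult_minus_left mult_minus_right r_r rt_r_self)
        then show False using False by blast
      qed
      moreover have "\<rho> = ?F (ray (g \<circ> r i))" using g(3) ray_comp[of "g \<circ> r i" "r i"] by (simp add: comp_assoc)
      ultimately show ?thesis by blast
    qed
  qed
  have fin': "finite (?F ` (neg_rays z - {?\<alpha>}))" using fin by simp
  have "card (neg_rays (r i z)) \<le> card (neg_rays z - {?\<alpha>})"
    using card_mono[OF fin' incl] card_image_le[of "neg_rays z - {?\<alpha>}" ?F] fin by simp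
  also have "\<dots> < card (neg_rays z)" by (rule card_Diff1_less[OF fin mem])
  finally show ?thesis using finite_subset[OF incl fin'] by blast
qed

lemma in_Tits_if_finite_neg_rays: "finite (neg_rays z) \<Longrightarrow> z \<in> Tits"
proof (induction "card (neg_rays z)" arbitrary: z rule: less_induct)
  case less
  show ?case
  proof (cases "z \<in> chamber")
    case True
    then show ?thesis using chamber_subset_Tits by blast
  next
    case False
    then obtain i where "rt i \<bullet> z < 0" unfolding chamber_def by (auto simp: not_le)
    then have "r i z \<in> Tits" using neg_rays_r_card_less less by blast
    then show ?thesis using W_Tits[OF r_in_W, of "r i z" i] by simp
  qed
qed

text \<open>A positive root negative at a point of a segment is negative at one of its ends, so the
segment inherits finiteness of negative rays.\<close>

lemma convex_Tits: "convex Tits"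
  unfolding convex_alt
proof (intro ballI allI impI)
  fix x y and u :: real assume x: "x \<in> Tits" and y: "y \<in> Tits" and u: "0 \<le> u \<and> u \<le> 1"
  define z where "z = (1 - u) *\<^sub>R x + u *\<^sub>R y"
  have "{g \<in> pos_roots. g z < 0} \<subseteq> {g \<in> pos_roots. g x < 0} \<union> {g \<in> pos_roots. g y < 0}"
  proof
    fix g assume g: "g \<in> {g \<in> pos_roots. g z < 0}"
    then obtain c where c: "g = root_comb c" unfolding pos_roots_def nonneg_comb_def by blast
    have "g z = (1 - u) * g x + u * g y" unfolding c z_def by (rule root_comb_lincomb)
    moreover have "(1 - u) * g x + u * g y \<ge> 0" if "g x \<ge> 0" "g y \<ge> 0"
      using that u by simp
    ultimately show "g \<in> {g \<in> pos_roots. g x < 0} \<union> {g \<in> pos_roots. g y < 0}" using g by force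
  qed
  then have "neg_rays z \<subseteq> neg_rays x \<union> neg_rays y" unfolding neg_rays_def by blast
  then have "finite (neg_rays z)"
    using finite_neg_rays[OF x] finite_neg_rays[OF y] by (meson finite_UnI finite_subset)
  then show "(1 - u) *\<^sub>R x + u *\<^sub>R y \<in> Tits" using in_Tits_if_finite_neg_rays unfolding z_def by blast
qed

section \<open>Dominant representatives\<close>

abbreviation dominant where "dominant \<equiv> dom_elt cor rt"

lemma dominant_in_orbit:
  assumes "x \<in> Yplus cor rt"
  obtains u where "u \<in> W" "dominant x = u x" "dominant x \<in> Yset" "dominant x \<in> chamber"
proof -
  have xY: "x \<in> Yset" and "x \<in> Tits" using assms by (auto simp: Yplus_def)
  then obtain w y where wy: "w \<in> W" "y \<in> chamber" "x = w y" unfolding mem_Tits by blast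
  obtain u where u: "u \<in> W" "u \<circ> w = id" using W_inverse[OF wy(1)] by blast
  have uxy: "u x = y" using u(2) wy(3) by (metis comp_apply id_apply)
  have yY: "y \<in> Yset" using W_Yset[OF u(1) xY] uxy by simp
  have unique: "\<mu> = y" if \<mu>: "\<mu> \<in> (\<lambda>w. w x) ` W \<inter> closure (Cf rt)" for \<mu>
  proof -
    obtain v where v: "v \<in> W" "\<mu> = v x" using \<mu> by blast
    have "(v \<circ> w) y = \<mu>" using v(2) wy(3) by simp
    then show ?thesis
      using chamber_W_orbit_unique[OF yY wy(2) _ _ W_comp[OF v(1) wy(1)]] W_Yset[OF v(1) xY] v(2) \<mu>
      unfolding closure_Cf_eq_chamber by auto
  qed
  have "y \<in> (\<lambda>w. w x) ` W \<inter> closure (Cf rt)"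
    using u(1) uxy wy(2) closure_Cf_eq_chamber by force
  then have "dominant x = y" unfolding dom_elt_def using unique by (rule the_equality)
  then show ?thesis using that u(1) uxy yY wy(2) by metis
qed

lemma dominant_minus_W_in_Qcor_plus:
  assumes "x \<in> Yplus cor rt" "w \<in> W"
  shows "dominant x - w x \<in> Qcor_plus cor"
proof -
  obtain u where u: "u \<in> W" "dominant x = u x" "dominant x \<in> Yset" "dominant x \<in> chamber"
    using dominant_in_orbit[OF assms(1)] by blast
  obtain v where v: "v \<in> W" "v \<circ> u = id" using W_inverse[OF u(1)] by blast
  have "w x = (w \<circ> v) (dominant x)" using u(2) v(2) by (metis comp_apply id_apply)
  then show ?thesis using chamber_minus_W_in_Qcor_plus[OF u(3,4) W_comp[OF assms(2) v(1)]] by simp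
qed

lemma Yplus_add: "l \<in> Yplus cor rt \<Longrightarrow> \<mu> \<in> Yplus cor rt \<Longrightarrow> l + \<mu> \<in> Yplus cor rt"
proof -
  assume "l \<in> Yplus cor rt" "\<mu> \<in> Yplus cor rt"
  then have Y: "l \<in> Yset" "\<mu> \<in> Yset" and T: "l \<in> Tits" "\<mu> \<in> Tits" by (auto simp: Yplus_def)
  have "(1 - 1/2) *\<^sub>R l + (1/2) *\<^sub>R \<mu> \<in> Tits"
    using convex_Tits[unfolded convex_alt, rule_format, OF T, of "1/2"] by simp
  from Tits_scaleR[OF this, of 2] have "l + \<mu> \<in> Tits" by (simp add: scaleR_add_right)
  then show ?thesis using Yset_add[OF Y] by (simp add: Yplus_def)
qed

lemma dominant_add_le:
  assumes l: "l \<in> Yplus cor rt" and \<mu>: "\<mu> \<in> Yplus cor rt"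
  shows "leQ cor (dominant (l + \<mu>)) (dominant l + dominant \<mu>)"
proof -
  obtain w where w: "w \<in> W" "dominant (l + \<mu>) = w (l + \<mu>)"
    using dominant_in_orbit[OF Yplus_add[OF l \<mu>]] by blast
  have "(dominant l + dominant \<mu>) - dominant (l + \<mu>) = (dominant l - w l) + (dominant \<mu> - w \<mu>)"
    using w W_linear[OF w(1)] by (simp add: linear_add)
  also have "\<dots> \<in> Qcor_plus cor"
    using dominant_minus_W_in_Qcor_plus[OF l w(1)] dominant_minus_W_in_Qcor_plus[OF \<mu> w(1)]
    by (rule Qcor_plus_add)
  finally show ?thesis unfolding leQ_def .
qed

definition orbit_hull :: "real^'d \<Rightarrow> (real^'d) set" where
  "orbit_hull x0 = convex hull ((\<lambda>w. w x0) ` W) \<inter> {x0 + q | q. q \<in> Qcor cor}"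

lemma W_convex_hull_orbit:
  assumes "w \<in> W"
  shows "w ` (convex hull ((\<lambda>v. v x0) ` W)) \<subseteq> convex hull ((\<lambda>v. v x0) ` W)"
proof -
  have "w ` (convex hull ((\<lambda>v. v x0) ` W)) = convex hull (w ` (\<lambda>v. v x0) ` W)"
    by (rule convex_hull_linear_image[OF W_linear[OF assms]])
  also have "\<dots> \<subseteq> convex hull ((\<lambda>v. v x0) ` W)"
    using W_comp[OF assms] by (intro hull_mono) (auto intro!: image_eqI[of _ _ "w \<circ> _"])
  finally show ?thesis .
qed

lemma R_i_orbit_hull: "E \<subseteq> orbit_hull x0 \<Longrightarrow> R_i cor rt i E \<subseteq> orbit_hull x0"
proof
  fix y assume E: "E \<subseteq> orbit_hull x0" and y: "y \<in> R_i cor rt i E"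
  let ?H = "convex hull ((\<lambda>w. w x0) ` W)"
  have "E \<union> r i ` E \<subseteq> ?H"
    using E W_convex_hull_orbit[OF r_in_W, of i x0] unfolding orbit_hull_def by blast
  then have "convex hull (E \<union> r i ` E) \<subseteq> ?H" by (simp add: hull_minimal)
  then have "y \<in> ?H" using y unfolding R_i_def by blast
  moreover obtain e q where "y = e + q" "e \<in> E" "q \<in> Qcor cor" using y unfolding R_i_def by blast
  moreover obtain q' where "e = x0 + q'" "q' \<in> Qcor cor"
    using E \<open>e \<in> E\<close> unfolding orbit_hull_def by blast
  ultimately show "y \<in> orbit_hull x0"
    unfolding orbit_hull_def by (auto intro!: exI[of _ "q' + q"] Qcor_add)
qed

lemma orbit_hull_subset_Yplus:
  assumes "x0 \<in> Yset" "x0 \<in> chamber"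
  shows "orbit_hull x0 \<subseteq> Yplus cor rt"
proof
  fix \<nu> assume \<nu>: "\<nu> \<in> orbit_hull x0"
  then obtain q where "\<nu> = x0 + q" "q \<in> Qcor cor" unfolding orbit_hull_def by blast
  then have "\<nu> \<in> Yset" using Yset_add[OF assms(1)] Qcor_subset_Yset[of cor, OF cor_in_Yset] by blast
  moreover have "(\<lambda>w. w x0) ` W \<subseteq> Tits" using W_Tits chamber_subset_Tits assms(2) by blast
  then have "convex hull ((\<lambda>w. w x0) ` W) \<subseteq> Tits" by (rule hull_minimal) (rule convex_Tits)
  ultimately show "\<nu> \<in> Yplus cor rt" using \<nu> unfolding orbit_hull_def Yplus_def by blast
qed

text \<open>A point of the orbit hull lies in \<open>x\<^sub>0 - \<real>\<^sub>+\<alpha>\<^sup>\<or>\<close> and in \<open>x\<^sub>0 + Q\<^sup>\<or>\<close>; as the coroots are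
linearly independent, its coefficients are nonnegative integers.\<close>

lemma orbit_hull_le:
  assumes x0: "x0 \<in> Yset" "x0 \<in> chamber" and z: "z \<in> orbit_hull x0"
  shows "x0 - z \<in> Qcor_plus cor"
proof -
  let ?K = "{x0 - (\<Sum>k\<in>UNIV. c k *\<^sub>R cor k) | c. \<forall>k. 0 \<le> c k}"
  have "(\<lambda>v. v x0) ` W \<subseteq> ?K"
  proof
    fix y assume "y \<in> (\<lambda>v. v x0) ` W"
    then obtain v where v: "v \<in> W" "y = v x0" by blast
    obtain n where "x0 - v x0 = (\<Sum>i\<in>UNIV. of_nat (n i) *\<^sub>R cor i)"
      using chamber_minus_W_in_Qcor_plus[OF x0 v(1)] by (auto simp: mem_Qcor_plus)
    then show "y \<in> ?K" using v(2) by (intro CollectI exI[of _ "\<lambda>i. of_nat (n i)"]) (simp add: algebra_simps)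
  qed
  then have "z \<in> ?K"
    using hull_minimal[of _ _ convex, OF _ convex_minus_nonneg_cone] z unfolding orbit_hull_def by blast
  then obtain c where c: "\<forall>k. 0 \<le> c k" "x0 - z = (\<Sum>k\<in>UNIV. c k *\<^sub>R cor k)" by auto
  obtain m where m: "z - x0 = (\<Sum>i\<in>UNIV. of_int (m i) *\<^sub>R cor i)"
    using z unfolding orbit_hull_def by (auto simp: mem_Qcor)
  have "(\<Sum>k\<in>UNIV. (c k + of_int (m k)) *\<^sub>R cor k) = (x0 - z) + (z - x0)"
    unfolding m c(2) by (simp add: scaleR_add_left sum.distrib)
  also have "\<dots> = 0" by simp
  finally have cm: "c k + of_int (m k) = 0" for k by (rule cor_real_independent)
  have "c k = of_nat (nat (- m k))" for k
  proof -
    have "c k = of_int (- m k)" using cm[of k] by simp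
    moreover from this have "- m k \<ge> 0" using c(1) by (metis of_int_0_le_iff)
    ultimately show ?thesis by simp
  qed
  then show ?thesis unfolding mem_Qcor_plus c(2) by (intro exI[of _ "\<lambda>k. nat (- m k)"]) simp
qed

lemma R_i_word_le:
  assumes \<mu>: "\<mu> \<in> Yplus cor rt" and \<nu>: "\<nu> \<in> foldr (R_i cor rt) l {\<mu>}"
  shows "\<nu> \<in> Yplus cor rt \<and> leQ cor (dominant \<nu>) (dominant \<mu>)"
proof -
  obtain u where u: "u \<in> W" "dominant \<mu> = u \<mu>" "dominant \<mu> \<in> Yset" "dominant \<mu> \<in> chamber"
    using dominant_in_orbit[OF \<mu>] by blast
  define x0 where "x0 = dominant \<mu>"
  have x0: "x0 \<in> Yset" "x0 \<in> chamber" using u unfolding x0_def by auto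
  obtain v where v: "v \<in> W" "v \<circ> u = id" using W_inverse[OF u(1)] by blast
  have \<mu>_eq: "\<mu> = v x0" using u(2) v(2) unfolding x0_def by (metis comp_apply id_apply)
  have "\<mu> - x0 \<in> Qcor cor"
    using W_minus_in_Qcor[OF v(1) x0(1)] \<mu>_eq by simp
  then have "\<mu> \<in> orbit_hull x0"
    unfolding orbit_hull_def \<mu>_eq using v(1) by (force intro: hull_inc)
  then have "foldr (R_i cor rt) l {\<mu>} \<subseteq> orbit_hull x0"
    by (induction l) (simp_all add: R_i_orbit_hull)
  then have \<nu>_hull: "\<nu> \<in> orbit_hull x0" using \<nu> by blast
  then have \<nu>_plus: "\<nu> \<in> Yplus cor rt" using orbit_hull_subset_Yplus[OF x0] by blast
  obtain w where w: "w \<in> W" "dominant \<nu> = w \<nu>" using dominant_in_orbit[OF \<nu>_plus] by blast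
  have "w \<nu> \<in> orbit_hull x0"
  proof -
    obtain q where q: "\<nu> = x0 + q" "q \<in> Qcor cor" using \<nu>_hull unfolding orbit_hull_def by blast
    have "w \<nu> = x0 + ((w \<nu> - \<nu>) + q)" using q(1) by simp
    moreover have "(w \<nu> - \<nu>) + q \<in> Qcor cor"
      using W_minus_in_Qcor[OF w(1)] \<nu>_plus q(2) Qcor_add by (auto simp: Yplus_def)
    moreover have "w \<nu> \<in> convex hull ((\<lambda>w. w x0) ` W)"
      using W_convex_hull_orbit[OF w(1)] \<nu>_hull unfolding orbit_hull_def by blast
    ultimately show ?thesis unfolding orbit_hull_def by blast
  qed
  then show ?thesis using orbit_hull_le[OF x0] \<nu>_plus w(2) unfolding leQ_def x0_def by simp
qed

end

theorem mainTheorem8: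
  fixes A :: "'i::finite \<Rightarrow> 'i \<Rightarrow> int"
    and cor rt :: "'i \<Rightarrow> real^'d"
  assumes "root_datum A cor rt"
  shows "(\<forall>l\<in>Yplus cor rt. \<forall>\<mu>\<in>Yplus cor rt.
            leQ cor (dom_elt cor rt (l + \<mu>)) (dom_elt cor rt l + dom_elt cor rt \<mu>))
       \<and> (\<forall>\<mu>\<in>Yplus cor rt. \<forall>v\<in>kmr_W cor rt. \<forall>\<nu>\<in>R_w cor rt v \<mu>.
            \<nu> \<in> Yplus cor rt \<and> leQ cor (dom_elt cor rt \<nu>) (dom_elt cor rt \<mu>))"
proof -
  interpret kac_moody A cor rt by unfold_locales (rule assms)
  show ?thesis
    using dominant_add_le R_i_word_le unfolding R_w_def by blast
qed

end
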